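(* Assume the standing assumptions (a)–(d) below, let $\bar\mu$ be a probability measure on $\mathbb{R}^d$ with finite second moment, $N\in\mathbb{N}$, $T>0$, $\epsilon\ge0$ with $(L+2\epsilon\tilde L)T^2\le1$. Let $x=(x^1,\dots,x^N)\sim\bar\mu^{\otimes N}$ and, independently, $\xi=(\xi^1,\dots,\xi^N)\sim\mathcal N(0,I_{Nd})$. Let $\bar{\mathbf X}^{\bar\mu,i}(x^i)=\bar q_T(x^i,\xi^i,\bar\mu)$ ($N$ independent copies of one nHMC step with initial distribution $\bar\mu$) and $\mathbf X^i(x)=q^i_T(x,\xi)$ (one xHMC step of the mean-field particle system from $\bar\mu^{\otimes N}$, with the same velocities). Then $$\mathbb{E}\Big[\frac1N\sum_{i=1}^N|\bar{\mathbf X}^{\bar\mu,i}(x^i)-\mathbf X^i(x)|\Big]\le N^{-1/2}\mathbf B,\qquad \mathbf B=4T^2\epsilon\tilde L\,\mathbf B_1^{1/2},$$ where $\mathbf B_1$ is any finite constant with $\sup_{0\le t\le T}\int_{\mathbb{R}^d}|y|^2\bar\mu_t(\mathrm{d}y)\le\mathbf B_1$.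
   Context: Standing assumptions: $V:\mathbb{R}^d\to\mathbb{R}$, $W:\mathbb{R}^d\times\mathbb{R}^d\to\mathbb{R}$ are $C^1$, $\nabla_1W$ is the gradient of $W$ in its first argument, and there are constants $L>0,K>0,\mathcal R\ge0,\tilde L\ge0$ with: (a) $V(0)=0$, $V\ge0$; (b) $|\nabla V(x)-\nabla V(y)|\le L|x-y|$; (c) $\langle x-y,\nabla V(x)-\nabla V(y)\rangle\ge K|x-y|^2+L^{-1}|\nabla V(x)-\nabla V(y)|^2$ whenever $|x-y|\ge\mathcal R$; (d) $W$ symmetric and $|\nabla_1W(x,y)-\nabla_1W(\tilde x,\tilde y)|\le\tilde L(|x-\tilde x|+|y-\tilde y|)$. Nonlinear dynamics $(\bar q_t,\bar p_t)(x,v,\bar\mu)$ on $\mathbb{R}^{2d}$: $\dot{\bar q}_t=\bar p_t$, $\dot{\bar p}_t=-\nabla V(\bar q_t)-\epsilon\int\nabla_1W(\bar q_t,u)\bar\mu_t(\mathrm{d}u)$, $(\bar q_0,\bar p_0)=(x,v)$, with $\bar\mu_t=\mathrm{Law}(\bar q_t(\tilde x,\tilde v,\bar\mu))$, $(\tilde x,\tilde v)\sim\bar\mu\otimes\mathcal N(0,I_d)$. Particle system: $U(x)=\sum_{i=1}^N\big(V(x^i)+\frac{\epsilon}{2N}\sum_{j=1}^NW(x^i,x^j)\big)$ on $\mathbb{R}^{Nd}$, $\nabla_iU=\partial U/\partial x^i$; the exact flow $(q_t,p_t)(x,v)$ solves $\dot q^i_t=p^i_t$, $\dot p^i_t=-\nabla_iU(q_t)$,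 $(q_0,p_0)=(x,v)$, $i=1,\dots,N$. *)

theory Defs
  imports "HOL-Probability.Probability"
begin

definition std_gaussian :: "'a::euclidean_space measure" where
  "std_gaussian = density lborel
     (\<lambda>x. ennreal ((2 * pi) powr (- real DIM('a) / 2) * exp (- (norm x)\<^sup>2 / 2)))"

definition nonlin_law :: "'a::euclidean_space measure \<Rightarrow> (real \<Rightarrow> 'a \<Rightarrow> 'a \<Rightarrow> 'a) \<Rightarrow> real \<Rightarrow> 'a measure" where
  "nonlin_law mu qb t = distr (mu \<Otimes>\<^sub>M std_gaussian) borel (\<lambda>(y, w). qb t y w)"

definition U_pot :: "nat \<Rightarrow> real \<Rightarrow> ('a \<Rightarrow> real) \<Rightarrow> ('a \<Rightarrow> 'a \<Rightarrow> real) \<Rightarrow> (nat \<Rightarrow> 'a) \<Rightarrow> real" where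
  "U_pot N \<epsilon> V W y = (\<Sum>i<N. V (y i) + \<epsilon> / (2 * real N) * (\<Sum>j<N. W (y i) (y j)))"

end

theory Submission
  imports Defs
begin

text \<open>The position
  differences \<open>Z\<^sub>i = qb\<^sup>i - q\<^sup>i\<close> satisfy \<open>Z\<^sub>i'' = F\<^sub>i\<close> with
  \<open>|F\<^sub>i| \<le> (L + \<epsilon> Lt) |Z\<^sub>i| + \<epsilon> Lt (mean over j of |Z\<^sub>j|) + \<epsilon> e\<^sub>i\<close>, where \<open>e\<^sub>i(s)\<close> is the
  distance between the mean-field force \<open>\<integral> \<nabla>\<^sub>1W(qb\<^sup>i, u) d\<mu>\<^sub>s(u)\<close> and its empirical
  counterpart \<open>N\<^sup>-\<^sup>1 \<Sigma>\<^sub>j \<nabla>\<^sub>1W(qb\<^sup>i, qb\<^sup>j)\<close> along the independent nonlinear particles.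
  Since \<open>(L + 2 \<epsilon> Lt) T\<^sup>2 \<le> 1\<close>, evaluating the Taylor formula at the time where the mean of
  the \<open>|Z\<^sub>i|\<close> is maximal gives \<open>mean |Z\<^sub>i(T)| \<le> 2 T \<integral>\<^sub>0\<^sup>T \<epsilon> mean e\<^sub>i\<close>.
  The nonlinear particles at time \<open>s\<close> are i.i.d. with law \<open>\<mu>\<^sub>s\<close>, so the centred terms
  \<open>\<nabla>\<^sub>1W(qb\<^sup>i, qb\<^sup>j) - \<integral> \<nabla>\<^sub>1W(qb\<^sup>i, u) d\<mu>\<^sub>s(u)\<close> are orthogonal in \<open>L\<^sup>2\<close> for different
  \<open>j\<close>; this law of large numbers gives \<open>E e\<^sub>i(s) \<le> 2 Lt B\<^sub>1\<^sup>1\<^sup>/\<^sup>2 N\<^sup>-\<^sup>1\<^sup>/\<^sup>2\<close>, and Tonelli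
  in \<open>(s, x, \<xi>)\<close> yields the bound.\<close>

section \<open>A second-order Gronwall estimate\<close>

lemma has_integral_second_order_remainder:
  fixes Z P F :: "real \<Rightarrow> 'a::banach"
  assumes t: "0 \<le> t" and Z0: "Z 0 = 0" and P0: "P 0 = 0"
    and dZ: "\<And>s. s \<in> {0..t} \<Longrightarrow> (Z has_vector_derivative P s) (at s within {0..t})"
    and dP: "\<And>s. s \<in> {0..t} \<Longrightarrow> (P has_vector_derivative F s) (at s within {0..t})"
  shows "((\<lambda>s. (t - s) *\<^sub>R F s) has_integral Z t) {0..t}"
proof -
  have "((\<lambda>s. (t - s) *\<^sub>R F s) has_integral
      ((t - t) *\<^sub>R P t + Z t) - ((t - 0) *\<^sub>R P 0 + Z 0)) {0..t}"
  proof (rule fundamental_theorem_of_calculus[OF t])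
    fix s assume s: "s \<in> {0..t}"
    have "((\<lambda>s. t - s) has_real_derivative -1) (at s within {0..t})"
      by (auto intro!: derivative_eq_intros)
    from has_vector_derivative_add[OF has_vector_derivative_scaleR[OF this dP[OF s]] dZ[OF s]]
    show "((\<lambda>s. (t - s) *\<^sub>R P s + Z s) has_vector_derivative (t - s) *\<^sub>R F s) (at s within {0..t})"
      by (simp add: algebra_simps)
  qed
  then show ?thesis using Z0 P0 by simp
qed

lemma integral_Icc_diff_left: "0 \<le> (t::real) \<Longrightarrow> integral {0..t} (\<lambda>s. t - s) = t\<^sup>2 / 2"
proof -
  assume t: "0 \<le> t"
  have "((\<lambda>s. t - s) has_integral ((t * t - t\<^sup>2 / 2) - (t * 0 - 0\<^sup>2 / 2))) {0..t}"
    by (rule fundamental_theorem_of_calculus[OF t])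
      (auto intro!: derivative_eq_intros simp flip: has_real_derivative_iff_has_vector_derivative)
  then show ?thesis by (simp add: power2_eq_square integral_unique)
qed

lemma norm_second_order_le:
  fixes Z P F :: "real \<Rightarrow> 'a::banach"
  assumes t: "0 \<le> t" and Z0: "Z 0 = 0" and P0: "P 0 = 0"
    and dZ: "\<And>s. s \<in> {0..t} \<Longrightarrow> (Z has_vector_derivative P s) (at s within {0..t})"
    and dP: "\<And>s. s \<in> {0..t} \<Longrightarrow> (P has_vector_derivative F s) (at s within {0..t})"
    and F_le: "\<And>s. s \<in> {0..t} \<Longrightarrow> norm (F s) \<le> a s + e s"
    and a: "continuous_on {0..t} a" and e: "e integrable_on {0..t}"
    and e_nonneg: "\<And>s. s \<in> {0..t} \<Longrightarrow> 0 \<le> e s"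
  shows "norm (Z t) \<le> integral {0..t} (\<lambda>s. (t - s) * a s) + t * integral {0..t} e"
proof -
  have remainder: "((\<lambda>s. (t - s) *\<^sub>R F s) has_integral Z t) {0..t}"
    by (rule has_integral_second_order_remainder[OF t Z0 P0 dZ dP])
  have int_a: "(\<lambda>s. (t - s) * a s) integrable_on {0..t}"
    by (intro integrable_continuous_interval continuous_intros a)
  have int_e: "(\<lambda>s. t * e s) integrable_on {0..t}"
    by (rule integrable_on_mult_right[OF e])
  have "norm ((t - s) *\<^sub>R F s) \<le> (t - s) * a s + t * e s" if s: "s \<in> {0..t}" for s
  proof -
    have "norm ((t - s) *\<^sub>R F s) \<le> (t - s) * (a s + e s)"
      using F_le[OF s] s by (auto intro: mult_left_mono)
    also have "\<dots> \<le> (t - s) * a s + t * e s"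
      using s e_nonneg[OF s] by (simp add: distrib_left mult_right_mono)
    finally show ?thesis .
  qed
  then have "norm (Z t) \<le> integral {0..t} (\<lambda>s. (t - s) * a s + t * e s)"
    using integral_norm_bound_integral[OF has_integral_integrable[OF remainder] integrable_add[OF int_a int_e]]
    by (simp add: integral_unique[OF remainder])
  then show ?thesis
    by (simp add: integral_add[OF int_a int_e])
qed

lemma second_order_integral_gronwall:
  fixes m g :: "real \<Rightarrow> real"
  assumes T: "0 < T" and c: "0 \<le> c" and step: "c * T\<^sup>2 \<le> 1"
    and m_cont: "continuous_on {0..T} m" and m_nonneg: "\<And>s. s \<in> {0..T} \<Longrightarrow> 0 \<le> m s"
    and g_int: "g integrable_on {0..T}" and g_nonneg: "\<And>s. s \<in> {0..T} \<Longrightarrow> 0 \<le> g s"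
    and m_le: "\<And>t. t \<in> {0..T} \<Longrightarrow>
      m t \<le> c * integral {0..t} (\<lambda>s. (t - s) * m s) + t * integral {0..t} g"
  shows "m T \<le> 2 * T * integral {0..T} g"
proof -
  obtain t0 where t0: "t0 \<in> {0..T}" and t0_max: "\<And>s. s \<in> {0..T} \<Longrightarrow> m s \<le> m t0"
    using continuous_attains_sup[OF compact_Icc _ m_cont] T by fastforce
  have "integral {0..t0} (\<lambda>s. (t0 - s) * m s) \<le> integral {0..t0} (\<lambda>s. m t0 * (t0 - s))"
    using t0 t0_max
    by (intro integral_le integrable_continuous_interval continuous_intros continuous_on_subset[OF m_cont])
      (auto simp: mult.commute intro!: mult_right_mono)
  also have "\<dots> = m t0 * t0\<^sup>2 / 2"
    using t0 by (simp add: integral_Icc_diff_left)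
  finally have "c * integral {0..t0} (\<lambda>s. (t0 - s) * m s) \<le> (c * t0\<^sup>2) * m t0 / 2"
    using c by (auto dest: mult_left_mono[of _ _ c] simp: algebra_simps)
  also have "\<dots> \<le> m t0 / 2"
    using t0 c step m_nonneg[OF t0]
    by (intro divide_right_mono mult_left_le_one_le order_trans[OF mult_left_mono[OF power_mono] step]) auto
  finally have "m t0 \<le> m t0 / 2 + t0 * integral {0..t0} g"
    using m_le[OF t0] by linarith
  moreover have "t0 * integral {0..t0} g \<le> T * integral {0..T} g"
    using t0 g_nonneg g_int
    by (intro mult_mono integral_subset_le integral_nonneg integrable_on_subinterval[OF g_int]) auto
  ultimately show ?thesis
    using t0_max[of T] T by simp
qed

lemma second_order_mean_gronwall:
  fixes Z P F :: "nat \<Rightarrow> real \<Rightarrow> 'a::banach" and e :: "nat \<Rightarrow> real \<Rightarrow> real"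
  assumes T: "0 < T" and \<alpha>: "0 \<le> \<alpha>" and \<beta>: "0 \<le> \<beta>" and step: "(\<alpha> + \<beta>) * T\<^sup>2 \<le> 1"
    and Z0: "\<And>i. i < N \<Longrightarrow> Z i 0 = 0" and P0: "\<And>i. i < N \<Longrightarrow> P i 0 = 0"
    and dZ: "\<And>i s. i < N \<Longrightarrow> s \<in> {0..T} \<Longrightarrow> (Z i has_vector_derivative P i s) (at s within {0..T})"
    and dP: "\<And>i s. i < N \<Longrightarrow> s \<in> {0..T} \<Longrightarrow> (P i has_vector_derivative F i s) (at s within {0..T})"
    and F_le: "\<And>i s. i < N \<Longrightarrow> s \<in> {0..T} \<Longrightarrow>
       norm (F i s) \<le> \<alpha> * norm (Z i s) + \<beta> * ((\<Sum>j<N. norm (Z j s)) / N) + e i s"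
    and e_int: "\<And>i. i < N \<Longrightarrow> e i integrable_on {0..T}"
    and e_nonneg: "\<And>i s. i < N \<Longrightarrow> s \<in> {0..T} \<Longrightarrow> 0 \<le> e i s"
  shows "(\<Sum>i<N. norm (Z i T)) / N \<le> 2 * T * integral {0..T} (\<lambda>s. (\<Sum>i<N. e i s) / N)"
proof (cases "N = 0")
  case False
  then have N: "0 < real N"
    by simp
  define m where "m s = (\<Sum>i<N. norm (Z i s)) / N" for s
  have Z_cont: "continuous_on {0..t} (Z i)" if "t \<le> T" "i < N" for t i
    using continuous_on_vector_derivative[OF dZ] continuous_on_subset that by fastforce
  have m_cont: "continuous_on {0..t} m" if "t \<le> T" for t
    unfolding m_def using that N by (intro continuous_intros Z_cont) auto
  have F_le': "norm (F i s) \<le> (\<alpha> * norm (Z i s) + \<beta> * m s) + e i s" if "i < N" "s \<in> {0..T}" for i s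
    using F_le[OF that] by (simp add: m_def)
  have e_int': "e i integrable_on {0..t}" if "t \<le> T" "i < N" for t i
    using that by (intro integrable_on_subinterval[OF e_int]) auto
  have average: "(\<Sum>i<N. integral {0..t} (f i)) / N = integral {0..t} (\<lambda>s. (\<Sum>i<N. f i s) / N)"
    if "\<And>i. i < N \<Longrightarrow> f i integrable_on {0..t}" for f :: "nat \<Rightarrow> real \<Rightarrow> real" and t
    using that by (intro integral_unique[symmetric] has_integral_divide has_integral_sum)
      (auto intro: integrable_integral)
  have "m T \<le> 2 * T * integral {0..T} (\<lambda>s. (\<Sum>i<N. e i s) / N)"
  proof (rule second_order_integral_gronwall[OF T _ step m_cont[OF order_refl]])
    fix t assume t: "t \<in> {0..T}"
    have "norm (Z i t) \<le> integral {0..t} (\<lambda>s. (t - s) * (\<alpha> * norm (Z i s) + \<beta> * m s))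
        + t * integral {0..t} (e i)" if i: "i < N" for i
      using t i
      by (intro norm_second_order_le[where P = "P i" and F = "F i"] Z0 P0
          has_vector_derivative_within_subset[OF dZ] has_vector_derivative_within_subset[OF dP]
          continuous_intros Z_cont m_cont e_int' e_nonneg F_le') auto
    then have "m t \<le> (\<Sum>i<N. integral {0..t} (\<lambda>s. (t - s) * (\<alpha> * norm (Z i s) + \<beta> * m s))
        + t * integral {0..t} (e i)) / N"
      unfolding m_def[of t] using N by (intro divide_right_mono sum_mono) auto
    also have "\<dots> = integral {0..t} (\<lambda>s. (\<Sum>i<N. (t - s) * (\<alpha> * norm (Z i s) + \<beta> * m s)) / N)
        + t * integral {0..t} (\<lambda>s. (\<Sum>i<N. e i s) / N)"
    proof -
      have "(\<Sum>i<N. integral {0..t} (\<lambda>s. (t - s) * (\<alpha> * norm (Z i s) + \<beta> * m s))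
          + t * integral {0..t} (e i)) / N
          = (\<Sum>i<N. integral {0..t} (\<lambda>s. (t - s) * (\<alpha> * norm (Z i s) + \<beta> * m s))) / N
          + t * ((\<Sum>i<N. integral {0..t} (e i)) / N)"
        by (simp add: sum.distrib add_divide_distrib sum_distrib_left)
      moreover have "(\<lambda>s. (t - s) * (\<alpha> * norm (Z i s) + \<beta> * m s)) integrable_on {0..t}" if "i < N" for i
        using t that by (intro integrable_continuous_interval continuous_intros Z_cont m_cont) auto
      ultimately show ?thesis
        using t e_int' by (subst (asm) (1 2) average) auto
    qed
    also have "(\<lambda>s. (\<Sum>i<N. (t - s) * (\<alpha> * norm (Z i s) + \<beta> * m s)) / N) = (\<lambda>s. (\<alpha> + \<beta>) * ((t - s) * m s))"
    proof
      fix s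
      have "(\<Sum>i<N. (t - s) * (\<alpha> * norm (Z i s) + \<beta> * m s))
          = (t - s) * (\<alpha> * (\<Sum>i<N. norm (Z i s)) + real N * (\<beta> * m s))"
        by (simp add: sum.distrib flip: sum_distrib_left)
      then show "(\<Sum>i<N. (t - s) * (\<alpha> * norm (Z i s) + \<beta> * m s)) / N = (\<alpha> + \<beta>) * ((t - s) * m s)"
        using N by (simp add: m_def field_simps)
    qed
    finally show "m t \<le> (\<alpha> + \<beta>) * integral {0..t} (\<lambda>s. (t - s) * m s)
        + t * integral {0..t} (\<lambda>s. (\<Sum>i<N. e i s) / N)"
      by simp
  qed (use \<alpha> \<beta> e_int e_nonneg in
      \<open>auto simp: m_def intro!: divide_nonneg_nonneg sum_nonneg integrable_on_divide integrable_sum\<close>)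
  then show ?thesis
    unfolding m_def .
qed simp

section \<open>Lipschitz interaction kernels and their empirical means\<close>

lemma continuous_on_lipschitz_kernel:
  fixes g :: "'a::real_normed_vector \<Rightarrow> 'b::real_normed_vector \<Rightarrow> 'c::real_normed_vector"
  assumes lip: "\<And>x y x' y'. norm (g x y - g x' y') \<le> Lt * (norm (x - x') + norm (y - y'))"
    and Lt: "0 \<le> Lt"
  shows "continuous_on UNIV (\<lambda>p. g (fst p) (snd p))"
proof (rule lipschitz_on_continuous_on)
  show "(2 * Lt)-lipschitz_on UNIV (\<lambda>p. g (fst p) (snd p))"
  proof (rule lipschitz_onI)
    fix p q :: "'a \<times> 'b"
    have pq: "p - q = (fst p - fst q, snd p - snd q)"
      by (simp add: prod_eq_iff)
    have "norm (fst p - fst q) + norm (snd p - snd q) \<le> 2 * norm (p - q)"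
      using norm_fst_le[of "fst p - fst q" "snd p - snd q"] norm_snd_le[of "snd p - snd q" "fst p - fst q"]
      unfolding pq by linarith
    then have "Lt * (norm (fst p - fst q) + norm (snd p - snd q)) \<le> 2 * Lt * norm (p - q)"
      using mult_left_mono[OF _ Lt] by fastforce
    then show "dist (g (fst p) (snd p)) (g (fst q) (snd q)) \<le> 2 * Lt * dist p q"
      using lip[of "fst p" "snd p" "fst q" "snd q"] by (simp add: dist_norm)
  qed (use Lt in simp)
qed

lemma (in prob_space) square_expectation_le:
  fixes f :: "'a \<Rightarrow> real"
  assumes "f \<in> borel_measurable M" and "integrable M (\<lambda>x. (f x)\<^sup>2)"
  shows "(expectation f)\<^sup>2 \<le> expectation (\<lambda>x. (f x)\<^sup>2)"
  using variance_eq[of f] variance_positive[of f] square_integrable_imp_integrable[OF assms]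
    assms(2) by simp

definition kernel_mean ::
    "'a measure \<Rightarrow> ('b \<Rightarrow> 'a \<Rightarrow> 'c::{banach,second_countable_topology}) \<Rightarrow> 'b \<Rightarrow> 'c" where
  "kernel_mean \<mu> g a = (\<integral>u. g a u \<partial>\<mu>)"

locale lipschitz_kernel = prob_space \<mu>
  for \<mu> :: "'a::euclidean_space measure" +
  fixes g :: "'a \<Rightarrow> 'a \<Rightarrow> 'b::euclidean_space" and Lt :: real
  assumes sets_eq_borel: "sets \<mu> = sets borel"
    and lipschitz: "\<And>x y x' y'. norm (g x y - g x' y') \<le> Lt * (norm (x - x') + norm (y - y'))"
    and Lt_nonneg: "0 \<le> Lt"
    and integrable_norm_sq: "integrable \<mu> (\<lambda>u. (norm u)\<^sup>2)"
begin

lemma measurable_kernel [measurable]: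
  "f \<in> borel_measurable M \<Longrightarrow> h \<in> borel_measurable M \<Longrightarrow> (\<lambda>x. g (f x) (h x)) \<in> borel_measurable M"
  by (rule borel_measurable_continuous_Pair[OF _ _ continuous_on_lipschitz_kernel[OF lipschitz Lt_nonneg]])

lemma borel_measurable_of_borel: "f \<in> borel_measurable borel \<Longrightarrow> f \<in> borel_measurable \<mu>"
  using measurable_cong_sets[OF sets_eq_borel refl] by auto

lemma integrable_norm: "integrable \<mu> norm"
  by (rule square_integrable_imp_integrable[OF borel_measurable_of_borel integrable_norm_sq]) simp

lemma first_moment_le: "(\<integral>u. norm u \<partial>\<mu>) \<le> sqrt (\<integral>u. (norm u)\<^sup>2 \<partial>\<mu>)"
  using square_expectation_le[OF borel_measurable_of_borel integrable_norm_sq]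
  by (intro real_le_rsqrt) simp

lemma integrable_kernel: "integrable \<mu> (g a)"
proof (rule Bochner_Integration.integrable_bound)
  show "integrable \<mu> (\<lambda>u. norm (g a 0) + Lt * norm u)"
    using integrable_norm by simp
  show "g a \<in> borel_measurable \<mu>"
    by (rule borel_measurable_of_borel) simp
  have "norm (g a u) \<le> norm (g a 0) + Lt * norm u" for u
    using norm_triangle_sub[of "g a u" "g a 0"] lipschitz[of a u a 0] by simp
  then show "AE u in \<mu>. norm (g a u) \<le> norm (norm (g a 0) + Lt * norm u)"
    using Lt_nonneg by (intro AE_I2) (simp add: order_trans[OF _ abs_ge_self])
qed

lemma norm_kernel_mean_diff_le:
  "norm (kernel_mean \<mu> g a - g a b) \<le> Lt * ((\<integral>u. norm u \<partial>\<mu>) + norm b)"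
proof -
  have "kernel_mean \<mu> g a - g a b = (\<integral>u. g a u - g a b \<partial>\<mu>)"
    unfolding kernel_mean_def using integrable_kernel by (simp add: prob_space)
  also have "norm \<dots> \<le> (\<integral>u. norm (g a u - g a b) \<partial>\<mu>)"
    by (rule integral_norm_bound)
  also have "\<dots> \<le> (\<integral>u. Lt * norm u + Lt * norm b \<partial>\<mu>)"
  proof (rule integral_mono)
    show "integrable \<mu> (\<lambda>u. norm (g a u - g a b))"
      using integrable_kernel by simp
    show "integrable \<mu> (\<lambda>u. Lt * norm u + Lt * norm b)"
      using integrable_norm by simp
    fix u
    have "norm (g a u - g a b) \<le> Lt * norm (u - b)"
      using lipschitz[of a u a b] by simp
    also have "\<dots> \<le> Lt * (norm u + norm b)"
      using Lt_nonneg by (intro mult_left_mono norm_triangle_ineq4)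
    finally show "norm (g a u - g a b) \<le> Lt * norm u + Lt * norm b"
      by (simp add: algebra_simps)
  qed
  also have "\<dots> = Lt * ((\<integral>u. norm u \<partial>\<mu>) + norm b)"
    using integrable_norm by (simp add: prob_space algebra_simps)
  finally show ?thesis .
qed

lemma norm_kernel_mean_diff_average_le:
  assumes I: "finite I" "I \<noteq> {}"
  shows "norm (kernel_mean \<mu> g a - (1 / card I) *\<^sub>R (\<Sum>j\<in>I. g a (b j)))
      \<le> Lt * (sqrt (\<integral>u. (norm u)\<^sup>2 \<partial>\<mu>) + (\<Sum>j\<in>I. norm (b j)) / card I)"
proof -
  have n: "0 < card I"
    using I by (simp add: card_gt_0_iff)
  have "kernel_mean \<mu> g a - (1 / card I) *\<^sub>R (\<Sum>j\<in>I. g a (b j))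
      = (1 / card I) *\<^sub>R (\<Sum>j\<in>I. kernel_mean \<mu> g a - g a (b j))"
    using n by (simp add: sum_subtractf scaleR_diff_right sum_constant_scaleR)
  then have "norm (kernel_mean \<mu> g a - (1 / card I) *\<^sub>R (\<Sum>j\<in>I. g a (b j)))
      \<le> (1 / card I) * (\<Sum>j\<in>I. norm (kernel_mean \<mu> g a - g a (b j)))"
    using norm_sum[of "\<lambda>j. kernel_mean \<mu> g a - g a (b j)" I] by (simp add: divide_right_mono)
  also have "\<dots> \<le> (1 / card I) * (\<Sum>j\<in>I. Lt * (sqrt (\<integral>u. (norm u)\<^sup>2 \<partial>\<mu>) + norm (b j)))"
    using order_trans[OF norm_kernel_mean_diff_le mult_left_mono[OF add_right_mono[OF first_moment_le] Lt_nonneg]]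
    by (intro mult_left_mono sum_mono) auto
  also have "\<dots> = Lt * (sqrt (\<integral>u. (norm u)\<^sup>2 \<partial>\<mu>) + (\<Sum>j\<in>I. norm (b j)) / card I)"
    using n by (simp add: sum.distrib sum_distrib_left[symmetric] field_simps)
  finally show ?thesis .
qed

lemma lipschitz_kernel_mean: "Lt-lipschitz_on UNIV (kernel_mean \<mu> g)"
proof (rule lipschitz_onI[OF _ Lt_nonneg])
  fix a a' :: 'a
  have "norm (kernel_mean \<mu> g a - kernel_mean \<mu> g a') = norm (\<integral>u. g a u - g a' u \<partial>\<mu>)"
    unfolding kernel_mean_def using integrable_kernel by simp
  also have "\<dots> \<le> (\<integral>u. norm (g a u - g a' u) \<partial>\<mu>)"
    by (rule integral_norm_bound)
  also have "\<dots> \<le> (\<integral>u. Lt * norm (a - a') \<partial>\<mu>)"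
  proof (rule integral_mono)
    show "norm (g a u - g a' u) \<le> Lt * norm (a - a')" for u
      using lipschitz[of a u a' u] by simp
  qed (use integrable_kernel in auto)
  finally show "dist (kernel_mean \<mu> g a) (kernel_mean \<mu> g a') \<le> Lt * dist a a'"
    by (simp add: dist_norm prob_space)
qed

lemma measurable_kernel_mean [measurable]:
  assumes "f \<in> borel_measurable M"
  shows "(\<lambda>x. kernel_mean \<mu> g (f x)) \<in> borel_measurable M"
proof -
  have "kernel_mean \<mu> g \<in> borel_measurable borel"
    by (intro borel_measurable_continuous_onI lipschitz_on_continuous_on[OF lipschitz_kernel_mean])
  from measurable_compose[OF assms this] show ?thesis
    by (simp add: comp_def)
qed

lemma product_prob_space_PiM: "product_prob_space (\<lambda>_. \<mu>)"
  by (simp add: product_prob_space_def product_prob_space_axioms_def product_sigma_finite_def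
      prob_space_axioms prob_space_imp_sigma_finite)

lemma measurable_component_borel [measurable]:
  "j \<in> I \<Longrightarrow> (\<lambda>y. y j) \<in> borel_measurable (\<Pi>\<^sub>M i\<in>I. \<mu>)"
  using measurable_component_singleton[of j I "\<lambda>_. \<mu>"]
  by (metis measurable_cong_sets[OF refl sets_eq_borel])

lemma second_moment_PiM_component:
  assumes "j \<in> I"
  shows "integrable (\<Pi>\<^sub>M i\<in>I. \<mu>) (\<lambda>y. (norm (y j))\<^sup>2)"
    and "(\<integral>y. (norm (y j))\<^sup>2 \<partial>(\<Pi>\<^sub>M i\<in>I. \<mu>)) = (\<integral>u. (norm u)\<^sup>2 \<partial>\<mu>)"
proof -
  have component: "(\<lambda>y. y j) \<in> measurable (\<Pi>\<^sub>M i\<in>I. \<mu>) \<mu>"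
    using assms by simp
  have distr: "distr (\<Pi>\<^sub>M i\<in>I. \<mu>) \<mu> (\<lambda>y. y j) = \<mu>"
    using assms by (intro distr_PiM_component prob_space_axioms)
  have norm_sq: "(\<lambda>u. (norm u)\<^sup>2) \<in> borel_measurable \<mu>"
    by (rule borel_measurable_of_borel) simp
  show "integrable (\<Pi>\<^sub>M i\<in>I. \<mu>) (\<lambda>y. (norm (y j))\<^sup>2)"
    using integrable_distr_eq[OF component norm_sq] distr integrable_norm_sq by simp
  show "(\<integral>y. (norm (y j))\<^sup>2 \<partial>(\<Pi>\<^sub>M i\<in>I. \<mu>)) = (\<integral>u. (norm u)\<^sup>2 \<partial>\<mu>)"
    using integral_distr[OF component norm_sq] distr by simp
qed

definition kernel_fluctuation :: "('i \<Rightarrow> 'a) \<Rightarrow> 'i \<Rightarrow> 'i \<Rightarrow> 'b" where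
  "kernel_fluctuation y i j = kernel_mean \<mu> g (y i) - g (y i) (y j)"

lemma measurable_kernel_fluctuation [measurable]:
  "i \<in> I \<Longrightarrow> j \<in> I \<Longrightarrow> (\<lambda>y. kernel_fluctuation y i j) \<in> borel_measurable (\<Pi>\<^sub>M l\<in>I. \<mu>)"
  unfolding kernel_fluctuation_def by measurable

lemma norm_kernel_fluctuation_sq_le:
  "(norm (kernel_fluctuation y i j))\<^sup>2 \<le> 2 * Lt\<^sup>2 * ((\<integral>u. norm u \<partial>\<mu>)\<^sup>2 + (norm (y j))\<^sup>2)"
proof -
  let ?m = "\<integral>u. norm u \<partial>\<mu>"
  have "norm (kernel_fluctuation y i j) \<le> Lt * (?m + norm (y j))"
    unfolding kernel_fluctuation_def by (rule norm_kernel_mean_diff_le)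
  then have "(norm (kernel_fluctuation y i j))\<^sup>2 \<le> Lt\<^sup>2 * (?m + norm (y j))\<^sup>2"
    by (metis norm_ge_zero power_mono power_mult_distrib)
  also have "\<dots> \<le> Lt\<^sup>2 * (2 * (?m\<^sup>2 + (norm (y j))\<^sup>2))"
    using sum_squares_bound[of ?m "norm (y j)"] by (intro mult_left_mono) (auto simp: power2_sum)
  finally show ?thesis by (simp add: algebra_simps)
qed

lemma integrable_kernel_fluctuation_sq:
  assumes "i \<in> I" "j \<in> I"
  shows "integrable (\<Pi>\<^sub>M l\<in>I. \<mu>) (\<lambda>y. (norm (kernel_fluctuation y i j))\<^sup>2)"
proof (rule Bochner_Integration.integrable_bound)
  interpret P: prob_space "\<Pi>\<^sub>M l\<in>I. \<mu>"
    by (rule prob_space_PiM) (rule prob_space_axioms)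
  show "integrable (\<Pi>\<^sub>M l\<in>I. \<mu>) (\<lambda>y. 2 * Lt\<^sup>2 * ((\<integral>u. norm u \<partial>\<mu>)\<^sup>2 + (norm (y j))\<^sup>2))"
    using second_moment_PiM_component(1)[OF assms(2)] by simp
  show "AE y in \<Pi>\<^sub>M l\<in>I. \<mu>. norm ((norm (kernel_fluctuation y i j))\<^sup>2)
      \<le> norm (2 * Lt\<^sup>2 * ((\<integral>u. norm u \<partial>\<mu>)\<^sup>2 + (norm (y j))\<^sup>2))"
    using norm_kernel_fluctuation_sq_le by (intro AE_I2) (simp add: order_trans[OF _ abs_ge_self])
qed (use assms in measurable)

lemma integral_kernel_fluctuation_sq_le:
  assumes "i \<in> I" "j \<in> I"
  shows "(\<integral>y. (norm (kernel_fluctuation y i j))\<^sup>2 \<partial>(\<Pi>\<^sub>M l\<in>I. \<mu>)) \<le> 4 * Lt\<^sup>2 * (\<integral>u. (norm u)\<^sup>2 \<partial>\<mu>)"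
proof -
  interpret P: prob_space "\<Pi>\<^sub>M l\<in>I. \<mu>"
    by (rule prob_space_PiM) (rule prob_space_axioms)
  note moment = second_moment_PiM_component[OF assms(2)]
  have "(\<integral>y. (norm (kernel_fluctuation y i j))\<^sup>2 \<partial>(\<Pi>\<^sub>M l\<in>I. \<mu>))
      \<le> (\<integral>y. 2 * Lt\<^sup>2 * ((\<integral>u. norm u \<partial>\<mu>)\<^sup>2 + (norm (y j))\<^sup>2) \<partial>(\<Pi>\<^sub>M l\<in>I. \<mu>))"
    using integrable_kernel_fluctuation_sq[OF assms] moment(1) norm_kernel_fluctuation_sq_le
    by (intro integral_mono) auto
  also have "\<dots> = 2 * Lt\<^sup>2 * ((\<integral>u. norm u \<partial>\<mu>)\<^sup>2 + (\<integral>u. (norm u)\<^sup>2 \<partial>\<mu>))"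
    using moment by (simp add: P.prob_space)
  also have "\<dots> \<le> 2 * Lt\<^sup>2 * ((\<integral>u. (norm u)\<^sup>2 \<partial>\<mu>) + (\<integral>u. (norm u)\<^sup>2 \<partial>\<mu>))"
    using square_expectation_le[OF borel_measurable_of_borel integrable_norm_sq]
    by (intro mult_left_mono add_right_mono) auto
  finally show ?thesis by simp
qed

lemma integrable_kernel_fluctuation_inner:
  assumes "i \<in> I" "j \<in> I" "k \<in> I"
  shows "integrable (\<Pi>\<^sub>M l\<in>I. \<mu>) (\<lambda>y. kernel_fluctuation y i j \<bullet> kernel_fluctuation y i k)"
proof (rule Bochner_Integration.integrable_bound)
  show "integrable (\<Pi>\<^sub>M l\<in>I. \<mu>)
      (\<lambda>y. (norm (kernel_fluctuation y i j))\<^sup>2 + (norm (kernel_fluctuation y i k))\<^sup>2)"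
    using assms by (intro Bochner_Integration.integrable_add integrable_kernel_fluctuation_sq)
  have "\<bar>a \<bullet> b\<bar> \<le> (norm a)\<^sup>2 + (norm b)\<^sup>2" for a b :: 'b
    using Cauchy_Schwarz_ineq2[of a b] sum_squares_bound[of "norm a" "norm b"]
      mult_nonneg_nonneg[OF norm_ge_zero norm_ge_zero, of a b] by linarith
  then show "AE y in \<Pi>\<^sub>M l\<in>I. \<mu>. norm (kernel_fluctuation y i j \<bullet> kernel_fluctuation y i k)
      \<le> norm ((norm (kernel_fluctuation y i j))\<^sup>2 + (norm (kernel_fluctuation y i k))\<^sup>2)"
    by (intro AE_I2) simp
qed (use assms in measurable)

text \<open>Integrating out the particle \<open>k\<close> first kills the fluctuation it carries.\<close>
lemma integral_kernel_fluctuation_inner_eq_0: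
  fixes I :: "'i set"
  assumes I: "finite I" and ijk: "i \<in> I" "j \<in> I" "k \<in> I" and "k \<noteq> i" "k \<noteq> j"
  shows "(\<integral>y. kernel_fluctuation y i j \<bullet> kernel_fluctuation y i k \<partial>(\<Pi>\<^sub>M l\<in>I. \<mu>)) = 0"
proof -
  interpret P: product_prob_space "\<lambda>_. \<mu>" I
    by (rule product_prob_space_PiM)
  define f where "f y = kernel_fluctuation y i j \<bullet> kernel_fluctuation y i k" for y :: "'i \<Rightarrow> 'a"
  have f_int: "integrable (\<Pi>\<^sub>M l\<in>insert k (I - {k}). \<mu>) f"
    using integrable_kernel_fluctuation_inner[OF ijk] unfolding f_def by (simp only: insert_Diff[OF ijk(3)])
  have "(\<integral>y. f y \<partial>(\<Pi>\<^sub>M l\<in>I. \<mu>)) = (\<integral>y. f y \<partial>(\<Pi>\<^sub>M l\<in>insert k (I - {k}). \<mu>))"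
    by (simp only: insert_Diff[OF ijk(3)])
  also have "\<dots> = (\<integral>x. (\<integral>t. f (x(k := t)) \<partial>\<mu>) \<partial>(\<Pi>\<^sub>M l\<in>I - {k}. \<mu>))"
    by (rule P.product_integral_insert) (use I f_int in auto)
  also have "\<dots> = 0"
  proof (rule integral_eq_zero_AE[OF AE_I2])
    fix x :: "'i \<Rightarrow> 'a"
    have "f (x(k := t)) = kernel_fluctuation x i j \<bullet> (kernel_mean \<mu> g (x i) - g (x i) t)" for t
      using assms by (simp add: f_def kernel_fluctuation_def)
    then have "(\<integral>t. f (x(k := t)) \<partial>\<mu>) = kernel_fluctuation x i j \<bullet> (\<integral>t. kernel_mean \<mu> g (x i) - g (x i) t \<partial>\<mu>)"
      using integrable_kernel by simp
    also have "(\<integral>t. kernel_mean \<mu> g (x i) - g (x i) t \<partial>\<mu>) = 0"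
      using integrable_kernel by (simp add: prob_space kernel_mean_def)
    finally show "(\<integral>t. f (x(k := t)) \<partial>\<mu>) = 0"
      by (simp only: inner_zero_right)
  qed
  finally show ?thesis
    unfolding f_def .
qed

lemma integral_norm_sum_kernel_fluctuation_sq_le:
  assumes I: "finite I" and i: "i \<in> I"
  shows "integrable (\<Pi>\<^sub>M l\<in>I. \<mu>) (\<lambda>y. (norm (\<Sum>j\<in>I. kernel_fluctuation y i j))\<^sup>2)"
    and "(\<integral>y. (norm (\<Sum>j\<in>I. kernel_fluctuation y i j))\<^sup>2 \<partial>(\<Pi>\<^sub>M l\<in>I. \<mu>))
      \<le> card I * (4 * Lt\<^sup>2 * (\<integral>u. (norm u)\<^sup>2 \<partial>\<mu>))"
proof -
  let ?w = "kernel_fluctuation"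
  have expand: "(norm (\<Sum>j\<in>I. ?w y i j))\<^sup>2 = (\<Sum>j\<in>I. \<Sum>k\<in>I. ?w y i j \<bullet> ?w y i k)" for y
    unfolding power2_norm_eq_inner by (simp add: inner_sum_left inner_sum_right) (rule sum.swap)
  have inner_int: "j \<in> I \<Longrightarrow> k \<in> I \<Longrightarrow> integrable (\<Pi>\<^sub>M l\<in>I. \<mu>) (\<lambda>y. ?w y i j \<bullet> ?w y i k)" for j k
    using i by (rule integrable_kernel_fluctuation_inner)
  show "integrable (\<Pi>\<^sub>M l\<in>I. \<mu>) (\<lambda>y. (norm (\<Sum>j\<in>I. ?w y i j))\<^sup>2)"
    unfolding expand using inner_int by (intro Bochner_Integration.integrable_sum) auto
  have off_diagonal: "(\<integral>y. ?w y i j \<bullet> ?w y i k \<partial>(\<Pi>\<^sub>M l\<in>I. \<mu>)) = 0"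
    if "j \<in> I" "k \<in> I" "j \<noteq> k" for j k
  proof (cases "k = i")
    case True
    then show ?thesis
      using integral_kernel_fluctuation_inner_eq_0[OF I i i that(1)] that
      by (simp add: inner_commute)
  next
    case False
    then show ?thesis
      using integral_kernel_fluctuation_inner_eq_0[OF I i that(1,2)] that by simp
  qed
  have "(\<integral>y. (norm (\<Sum>j\<in>I. ?w y i j))\<^sup>2 \<partial>(\<Pi>\<^sub>M l\<in>I. \<mu>))
      = (\<Sum>j\<in>I. \<Sum>k\<in>I. (\<integral>y. ?w y i j \<bullet> ?w y i k \<partial>(\<Pi>\<^sub>M l\<in>I. \<mu>)))"
    unfolding expand using inner_int
    by (simp add: Bochner_Integration.integral_sum Bochner_Integration.integrable_sum)
  also have "\<dots> = (\<Sum>j\<in>I. (\<integral>y. (norm (?w y i j))\<^sup>2 \<partial>(\<Pi>\<^sub>M l\<in>I. \<mu>)))"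
  proof (rule sum.cong[OF refl])
    fix j assume j: "j \<in> I"
    have "(\<Sum>k\<in>I - {j}. (\<integral>y. ?w y i j \<bullet> ?w y i k \<partial>(\<Pi>\<^sub>M l\<in>I. \<mu>))) = 0"
      using off_diagonal j by (intro sum.neutral) auto
    then show "(\<Sum>k\<in>I. (\<integral>y. ?w y i j \<bullet> ?w y i k \<partial>(\<Pi>\<^sub>M l\<in>I. \<mu>)))
        = (\<integral>y. (norm (?w y i j))\<^sup>2 \<partial>(\<Pi>\<^sub>M l\<in>I. \<mu>))"
      by (simp add: sum.remove[OF I j] power2_norm_eq_inner)
  qed
  also have "\<dots> \<le> (\<Sum>j\<in>I. 4 * Lt\<^sup>2 * (\<integral>u. (norm u)\<^sup>2 \<partial>\<mu>))"
    using i by (intro sum_mono integral_kernel_fluctuation_sq_le)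
  finally show "(\<integral>y. (norm (\<Sum>j\<in>I. ?w y i j))\<^sup>2 \<partial>(\<Pi>\<^sub>M l\<in>I. \<mu>))
      \<le> card I * (4 * Lt\<^sup>2 * (\<integral>u. (norm u)\<^sup>2 \<partial>\<mu>))"
    by simp
qed

lemma nn_integral_empirical_kernel_mean_error_le:
  assumes I: "finite I" and i: "i \<in> I"
  shows "(\<integral>\<^sup>+y. ennreal (norm (kernel_mean \<mu> g (y i) - (1 / card I) *\<^sub>R (\<Sum>j\<in>I. g (y i) (y j))))
      \<partial>(\<Pi>\<^sub>M l\<in>I. \<mu>)) \<le> ennreal (2 * Lt * sqrt (\<integral>u. (norm u)\<^sup>2 \<partial>\<mu>) / sqrt (card I))"
proof -
  interpret P: prob_space "\<Pi>\<^sub>M l\<in>I. \<mu>"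
    by (rule prob_space_PiM) (rule prob_space_axioms)
  define S where "S y = (\<Sum>j\<in>I. kernel_fluctuation y i j)" for y
  define m2 where "m2 = (\<integral>u. (norm u)\<^sup>2 \<partial>\<mu>)"
  have n: "0 < card I"
    using I i card_gt_0_iff by blast
  have eq: "kernel_mean \<mu> g (y i) - (1 / card I) *\<^sub>R (\<Sum>j\<in>I. g (y i) (y j)) = (1 / card I) *\<^sub>R S y" for y
    using n by (simp add: S_def kernel_fluctuation_def sum_subtractf scaleR_diff_right sum_constant_scaleR)
  have S_meas: "(\<lambda>y. norm (S y)) \<in> borel_measurable (\<Pi>\<^sub>M l\<in>I. \<mu>)"
    unfolding S_def using I i by measurable
  note S_sq = integral_norm_sum_kernel_fluctuation_sq_le[OF I i, folded S_def m2_def]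
  have S_int: "integrable (\<Pi>\<^sub>M l\<in>I. \<mu>) (\<lambda>y. norm (S y))"
    by (rule P.square_integrable_imp_integrable[OF S_meas S_sq(1)])
  have "(\<integral>y. norm (S y) \<partial>(\<Pi>\<^sub>M l\<in>I. \<mu>))\<^sup>2 \<le> card I * (4 * Lt\<^sup>2 * m2)"
    using P.square_expectation_le[OF S_meas S_sq(1)] S_sq(2) by simp
  then have "(\<integral>y. norm (S y) \<partial>(\<Pi>\<^sub>M l\<in>I. \<mu>)) \<le> sqrt (card I * (4 * Lt\<^sup>2 * m2))"
    by (rule real_le_rsqrt)
  also have "\<dots> = sqrt (card I) * (2 * Lt * sqrt m2)"
    using Lt_nonneg by (simp add: real_sqrt_mult)
  finally have "(\<integral>y. norm (S y) \<partial>(\<Pi>\<^sub>M l\<in>I. \<mu>)) \<le> sqrt (card I) * (2 * Lt * sqrt m2)" .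
  then have "(\<integral>y. norm (S y) \<partial>(\<Pi>\<^sub>M l\<in>I. \<mu>)) / card I \<le> sqrt (card I) * (2 * Lt * sqrt m2) / card I"
    using n by (simp add: divide_right_mono)
  also have "\<dots> = 2 * Lt * sqrt m2 / sqrt (card I)"
    using n by (simp add: field_simps)
  moreover have "(\<integral>\<^sup>+y. ennreal (norm ((1 / card I) *\<^sub>R S y)) \<partial>(\<Pi>\<^sub>M l\<in>I. \<mu>))
      = ennreal ((\<integral>y. norm (S y) \<partial>(\<Pi>\<^sub>M l\<in>I. \<mu>)) / card I)"
    using S_int by (subst nn_integral_eq_integral) auto
  ultimately show ?thesis
    unfolding eq m2_def[symmetric] by (simp add: ennreal_leI)
qed

end

section \<open>The gradient of the mean-field potential\<close>

lemma has_derivative_of_quadratic_remainder: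
  fixes f :: "'a::real_normed_vector \<Rightarrow> 'b::real_normed_vector"
  assumes D: "bounded_linear D"
    and remainder: "\<And>z. norm (f z - f x - D (z - x)) \<le> C * (norm (z - x))\<^sup>2"
  shows "(f has_derivative D) (at x)"
  unfolding has_derivative_at
proof (intro conjI D, rule Lim_null_comparison)
  show "\<forall>\<^sub>F h in at 0. norm (norm (f (x + h) - f x - D h) / norm h) \<le> C * norm h"
  proof (intro always_eventually allI)
    fix h :: 'a
    show "norm (norm (f (x + h) - f x - D h) / norm h) \<le> C * norm h"
      using remainder[of "x + h"]
      by (cases "h = 0") (simp_all add: divide_le_eq power2_eq_square mult.assoc)
  qed
  show "((\<lambda>h. C * norm h) \<longlongrightarrow> 0) (at (0::'a))"
    by (auto intro!: tendsto_eq_intros)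
qed

lemma lipschitz_gradient_remainder_le:
  fixes f :: "'a::euclidean_space \<Rightarrow> real"
  assumes grad: "\<And>x. (f has_derivative (\<lambda>h. df x \<bullet> h)) (at x)"
    and lip: "\<And>x y. norm (df x - df y) \<le> Lt * norm (x - y)" and Lt: "0 \<le> Lt"
  shows "\<bar>f z - f x - df x \<bullet> (z - x)\<bar> \<le> Lt * (norm (z - x))\<^sup>2"
proof -
  let ?S = "cball x (norm (z - x))"
  have "norm (f z - f x - df x \<bullet> (z - x)) \<le> norm (z - x) * (Lt * norm (z - x))"
  proof (rule differentiable_bound_linearization[where S = ?S and f' = "\<lambda>u h. df u \<bullet> h"])
    show "x + t *\<^sub>R (z - x) \<in> ?S" if "t \<in> {0..1}" for t
      using that by (auto simp: dist_norm intro: mult_left_le_one_le)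
    show "(f has_derivative (\<lambda>h. df u \<bullet> h)) (at u within ?S)" for u
      by (rule has_derivative_at_withinI[OF grad])
    show "onorm ((\<lambda>h. df u \<bullet> h) - (\<lambda>h. df x \<bullet> h)) \<le> Lt * norm (z - x)" if u: "u \<in> ?S" for u
    proof (rule onorm_le)
      fix h :: 'a
      have "\<bar>(df u - df x) \<bullet> h\<bar> \<le> norm (df u - df x) * norm h"
        by (rule Cauchy_Schwarz_ineq2)
      also have "\<dots> \<le> Lt * norm (z - x) * norm h"
        using u Lt order_trans[OF lip[of u x] mult_left_mono[of "norm (u - x)" "norm (z - x)" Lt]]
        by (intro mult_right_mono) (auto simp: dist_norm norm_minus_commute)
      finally show "norm (((\<lambda>h. df u \<bullet> h) - (\<lambda>h. df x \<bullet> h)) h) \<le> Lt * norm (z - x) * norm h"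
        by (simp add: inner_diff_left)
    qed
  qed simp
  then show ?thesis
    by (simp add: power2_eq_square algebra_simps)
qed

lemma has_derivative_diagonal:
  fixes W :: "'a::euclidean_space \<Rightarrow> 'a \<Rightarrow> real" and g1W :: "'a \<Rightarrow> 'a \<Rightarrow> 'a"
  assumes grad1W: "\<And>x y. ((\<lambda>z. W z y) has_derivative (\<lambda>h. g1W x y \<bullet> h)) (at x)"
    and lip: "\<And>x y x' y'. norm (g1W x y - g1W x' y') \<le> Lt * (norm (x - x') + norm (y - y'))"
    and Lt: "0 \<le> Lt" and sym: "\<And>x y. W x y = W y x"
  shows "((\<lambda>z. W z z) has_derivative (\<lambda>h. (2 *\<^sub>R g1W x x) \<bullet> h)) (at x)"
proof (rule has_derivative_of_quadratic_remainder[where C = "3 * Lt"])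
  show "bounded_linear (\<lambda>h. (2 *\<^sub>R g1W x x) \<bullet> h)"
    by (rule bounded_linear_inner_right)
  fix z
  have remainder: "\<bar>W z y - W x y - g1W x y \<bullet> (z - x)\<bar> \<le> Lt * (norm (z - x))\<^sup>2" for y
  proof (rule lipschitz_gradient_remainder_le[where f = "\<lambda>z. W z y", OF grad1W _ Lt])
    show "norm (g1W u y - g1W v y) \<le> Lt * norm (u - v)" for u v
      using lip[of u y v y] by simp
  qed
  have cross: "\<bar>(g1W x z - g1W x x) \<bullet> (z - x)\<bar> \<le> Lt * (norm (z - x))\<^sup>2"
  proof -
    have "\<bar>(g1W x z - g1W x x) \<bullet> (z - x)\<bar> \<le> norm (g1W x z - g1W x x) * norm (z - x)"
      by (rule Cauchy_Schwarz_ineq2)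
    also have "\<dots> \<le> Lt * norm (z - x) * norm (z - x)"
      using lip[of x z x x] by (intro mult_right_mono) auto
    finally show ?thesis
      by (simp add: power2_eq_square mult.assoc)
  qed
  have "W z z - W x x - (2 *\<^sub>R g1W x x) \<bullet> (z - x) =
      (W z z - W x z - g1W x z \<bullet> (z - x)) + (g1W x z - g1W x x) \<bullet> (z - x)
      + (W z x - W x x - g1W x x \<bullet> (z - x))"
    using sym[of x z] by (simp add: algebra_simps inner_diff_left)
  then show "norm (W z z - W x x - (2 *\<^sub>R g1W x x) \<bullet> (z - x)) \<le> 3 * Lt * (norm (z - x))\<^sup>2"
    using remainder[of z] remainder[of x] cross by simp
qed

lemma has_derivative_pair_update:
  fixes W :: "'a::euclidean_space \<Rightarrow> 'a \<Rightarrow> real" and g1W :: "'a \<Rightarrow> 'a \<Rightarrow> 'a"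
  assumes grad1W: "\<And>x y. ((\<lambda>z. W z y) has_derivative (\<lambda>h. g1W x y \<bullet> h)) (at x)"
    and lip: "\<And>x y x' y'. norm (g1W x y - g1W x' y') \<le> Lt * (norm (x - x') + norm (y - y'))"
    and Lt: "0 \<le> Lt" and sym: "\<And>x y. W x y = W y x"
  shows "((\<lambda>z. W ((y(i := z)) k) ((y(i := z)) j)) has_derivative
      (\<lambda>h. ((if k = i then g1W (y i) (y j) else 0) + (if j = i then g1W (y i) (y k) else 0)) \<bullet> h))
      (at (y i))"
proof (cases "k = i"; cases "j = i")
  assume "k = i" "j = i"
  then show ?thesis
    using has_derivative_diagonal[OF grad1W lip Lt sym, of "y i"]
    by (simp add: scaleR_2 inner_add_left)
next
  assume "k = i" "j \<noteq> i"
  then show ?thesis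
    using grad1W[where x = "y i" and y = "y j"] by simp
next
  assume "k \<noteq> i" "j = i"
  then show ?thesis
    using grad1W[where x = "y i" and y = "y k"] by (simp add: sym[of "y k"])
next
  assume "k \<noteq> i" "j \<noteq> i"
  then show ?thesis
    by simp
qed

lemma has_derivative_U_pot_coordinate:
  fixes V :: "'a::euclidean_space \<Rightarrow> real" and gV :: "'a \<Rightarrow> 'a"
    and W :: "'a \<Rightarrow> 'a \<Rightarrow> real" and g1W :: "'a \<Rightarrow> 'a \<Rightarrow> 'a"
  assumes gradV: "\<And>x. (V has_derivative (\<lambda>h. gV x \<bullet> h)) (at x)"
    and grad1W: "\<And>x y. ((\<lambda>z. W z y) has_derivative (\<lambda>h. g1W x y \<bullet> h)) (at x)"
    and lip: "\<And>x y x' y'. norm (g1W x y - g1W x' y') \<le> Lt * (norm (x - x') + norm (y - y'))"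
    and Lt: "0 \<le> Lt" and sym: "\<And>x y. W x y = W y x"
    and i: "i < N"
  shows "((\<lambda>z. U_pot N \<epsilon> V W (y(i := z))) has_derivative
      (\<lambda>h. (gV (y i) + (\<epsilon> / N) *\<^sub>R (\<Sum>j<N. g1W (y i) (y j))) \<bullet> h)) (at (y i))"
proof -
  define dV where "dV k = (if k = i then gV (y i) else 0)" for k
  define dW where "dW k j = (if k = i then g1W (y i) (y j) else 0)
      + (if j = i then g1W (y i) (y k) else 0)" for k j
  have V_deriv: "((\<lambda>z. V ((y(i := z)) k)) has_derivative (\<lambda>h. dV k \<bullet> h)) (at (y i))" for k
    using gradV[of "y i"] by (simp add: dV_def)
  have W_deriv: "((\<lambda>z. W ((y(i := z)) k) ((y(i := z)) j)) has_derivative (\<lambda>h. dW k j \<bullet> h)) (at (y i))"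
    for k j
    unfolding dW_def by (rule has_derivative_pair_update[OF grad1W lip Lt sym])
  have "((\<lambda>z. U_pot N \<epsilon> V W (y(i := z))) has_derivative
      (\<lambda>h. \<Sum>k<N. dV k \<bullet> h + \<epsilon> / (2 * real N) * (\<Sum>j<N. dW k j \<bullet> h))) (at (y i))"
    unfolding U_pot_def
    by (intro has_derivative_sum has_derivative_add has_derivative_mult_right V_deriv W_deriv)
  moreover have "(\<lambda>h. \<Sum>k<N. dV k \<bullet> h + \<epsilon> / (2 * real N) * (\<Sum>j<N. dW k j \<bullet> h))
      = (\<lambda>h. ((\<Sum>k<N. dV k) + (\<epsilon> / (2 * real N)) *\<^sub>R (\<Sum>k<N. \<Sum>j<N. dW k j)) \<bullet> h)"
    by (simp add: inner_add_left inner_sum_left sum.distrib sum_distrib_left)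
  moreover have "(\<Sum>k<N. dV k) = gV (y i)"
    using i by (simp add: dV_def)
  moreover have "(\<Sum>k<N. \<Sum>j<N. dW k j) = 2 *\<^sub>R (\<Sum>j<N. g1W (y i) (y j))"
  proof -
    have "(\<Sum>k<N. \<Sum>j<N. dW k j) = (\<Sum>k<N. \<Sum>j<N. if k = i then g1W (y i) (y j) else 0)
        + (\<Sum>k<N. \<Sum>j<N. if j = i then g1W (y i) (y k) else 0)"
      unfolding dW_def by (simp add: sum.distrib)
    also have "\<dots> = (\<Sum>j<N. g1W (y i) (y j)) + (\<Sum>k<N. g1W (y i) (y k))"
      using i by (simp add: sum.swap[of _ "{..<N}" "{..<N}"] if_distrib cong: if_cong)
    finally show ?thesis
      by (simp add: scaleR_2)
  qed
  ultimately show ?thesis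
    by simp
qed

lemma U_pot_gradient:
  fixes V :: "'a::euclidean_space \<Rightarrow> real" and gV :: "'a \<Rightarrow> 'a"
    and W :: "'a \<Rightarrow> 'a \<Rightarrow> real" and g1W :: "'a \<Rightarrow> 'a \<Rightarrow> 'a"
  assumes gradV: "\<And>x. (V has_derivative (\<lambda>h. gV x \<bullet> h)) (at x)"
    and grad1W: "\<And>x y. ((\<lambda>z. W z y) has_derivative (\<lambda>h. g1W x y \<bullet> h)) (at x)"
    and lip: "\<And>x y x' y'. norm (g1W x y - g1W x' y') \<le> Lt * (norm (x - x') + norm (y - y'))"
    and Lt: "0 \<le> Lt" and sym: "\<And>x y. W x y = W y x"
    and gradU: "((\<lambda>z. U_pot N \<epsilon> V W (y(i := z))) has_derivative (\<lambda>h. G \<bullet> h)) (at (y i))"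
    and i: "i < N"
  shows "G = gV (y i) + (\<epsilon> / N) *\<^sub>R (\<Sum>j<N. g1W (y i) (y j))"
proof -
  define G' where "G' = gV (y i) + (\<epsilon> / N) *\<^sub>R (\<Sum>j<N. g1W (y i) (y j))"
  have "(\<lambda>h. G \<bullet> h) = (\<lambda>h. G' \<bullet> h)"
    using has_derivative_unique[OF gradU has_derivative_U_pot_coordinate[OF gradV grad1W lip Lt sym i]]
    unfolding G'_def .
  then have "(G - G') \<bullet> (G - G') = 0"
    by (metis inner_diff_left right_minus_eq)
  then show ?thesis
    unfolding G'_def by simp
qed

section \<open>Product measures and joint measurability\<close>

lemma prob_space_std_gaussian: "prob_space (std_gaussian :: 'a::euclidean_space measure)"
proof
  have density_eq: "ennreal ((2 * pi) powr (- real DIM('a) / 2) * exp (- (norm x)\<^sup>2 / 2))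
      = (\<Prod>b\<in>Basis. ennreal (std_normal_density (x \<bullet> b)))" for x :: 'a
  proof -
    have "(norm x)\<^sup>2 = (\<Sum>b\<in>Basis. (x \<bullet> b)\<^sup>2)"
      unfolding power2_norm_eq_inner by (subst euclidean_inner) (simp add: power2_eq_square)
    then have "exp (- (norm x)\<^sup>2 / 2) = (\<Prod>b\<in>Basis. exp (- (x \<bullet> b)\<^sup>2 / 2))"
      by (simp add: exp_sum[symmetric] sum_divide_distrib sum_negf)
    moreover have "(2 * pi) powr (- real DIM('a) / 2) = (\<Prod>b\<in>(Basis::'a set). 1 / sqrt (2 * pi))"
    proof -
      have "(2 * pi) powr (- real DIM('a) / 2) = ((2 * pi) powr (-1/2)) ^ DIM('a)"
        by (simp add: powr_realpow[symmetric] powr_powr)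
      also have "(2 * pi) powr (-1/2) = 1 / sqrt (2 * pi)"
        by (simp add: powr_minus_divide powr_half_sqrt)
      finally show ?thesis by simp
    qed
    ultimately have "(2 * pi) powr (- real DIM('a) / 2) * exp (- (norm x)\<^sup>2 / 2)
        = (\<Prod>b\<in>Basis. 1 / sqrt (2 * pi) * exp (- (x \<bullet> b)\<^sup>2 / 2))"
      by (simp only: prod.distrib)
    then show ?thesis
      by (simp add: prod_ennreal std_normal_density_def)
  qed
  have "emeasure (std_gaussian::'a measure) (space std_gaussian) =
      (\<integral>\<^sup>+x. (\<Prod>b\<in>Basis. ennreal (std_normal_density (x \<bullet> b))) \<partial>(lborel::'a measure))"
    unfolding std_gaussian_def density_eq by (simp add: emeasure_density)
  also have "\<dots> = (\<Prod>b\<in>(Basis::'a set). (\<integral>\<^sup>+x. ennreal (std_normal_density x) \<partial>lborel))"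
    by (rule nn_integral_lborel_prod) auto
  also have "(\<integral>\<^sup>+x. ennreal (std_normal_density x) \<partial>lborel) = 1"
    by (subst nn_integral_eq_integral) (auto simp: normal_density_nonneg)
  finally show "emeasure (std_gaussian::'a measure) (space std_gaussian) = 1" by simp
qed

lemma floor_mult_div_tendsto: "(\<lambda>k. real_of_int \<lfloor>real (Suc k) * s\<rfloor> / real (Suc k)) \<longlonglongrightarrow> s"
proof (rule LIM_zero_cancel, rule Lim_null_comparison)
  show "\<forall>\<^sub>F k in sequentially. norm (real_of_int \<lfloor>real (Suc k) * s\<rfloor> / real (Suc k) - s)
      \<le> inverse (real (Suc k))"
  proof (intro always_eventually allI)
    fix k
    define n where "n = real (Suc k)"
    have n: "0 < n"
      unfolding n_def by simp
    have floor_le: "real_of_int \<lfloor>n * s\<rfloor> \<le> n * s" and floor_gt: "n * s - 1 < real_of_int \<lfloor>n * s\<rfloor>"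
      by linarith+
    have "real_of_int \<lfloor>n * s\<rfloor> / n \<le> s"
      using n floor_le by (simp add: divide_le_eq mult.commute)
    moreover have "s - inverse n = (n * s - 1) / n"
      using n by (simp add: field_simps)
    moreover have "(n * s - 1) / n \<le> real_of_int \<lfloor>n * s\<rfloor> / n"
      using n floor_gt by (intro divide_right_mono) auto
    ultimately have "\<bar>real_of_int \<lfloor>n * s\<rfloor> / n - s\<bar> \<le> inverse n"
      by linarith
    then show "norm (real_of_int \<lfloor>real (Suc k) * s\<rfloor> / real (Suc k) - s) \<le> inverse (real (Suc k))"
      unfolding n_def by simp
  qed
  show "(\<lambda>k. inverse (real (Suc k))) \<longlonglongrightarrow> 0"
    by (rule LIMSEQ_inverse_real_of_nat)
qed

text \<open>Rounding time down to the grid \<open>\<int> / (k + 1)\<close> gives countably-valued, hence measurable,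
  approximations, which converge by continuity in time.\<close>
lemma borel_measurable_caratheodory:
  fixes f :: "real \<Rightarrow> 'm \<Rightarrow> 'b::{metric_space, second_countable_topology}"
  assumes meas: "\<And>t. f t \<in> borel_measurable M"
    and cont: "\<And>\<omega>. \<omega> \<in> space M \<Longrightarrow> continuous_on {0..T} (\<lambda>t. f t \<omega>)"
    and T: "0 \<le> T"
  shows "(\<lambda>p. f (max 0 (min T (fst p))) (snd p)) \<in> borel_measurable (lborel \<Otimes>\<^sub>M M)"
proof -
  define c where "c s = max 0 (min T s)" for s :: real
  have c_cont: "continuous_on UNIV c"
    unfolding c_def by (intro continuous_intros)
  define fn where "fn k p = f (c (real_of_int \<lfloor>real (Suc k) * fst p\<rfloor> / real (Suc k))) (snd p)" for k p
  have fn_meas: "fn k \<in> borel_measurable (lborel \<Otimes>\<^sub>M M)" for k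
  proof -
    have "(\<lambda>p. f (c (real_of_int z / real (Suc k))) (snd p)) \<in> borel_measurable (lborel \<Otimes>\<^sub>M M)"
      for z :: int
      using measurable_compose[OF measurable_snd meas] by simp
    moreover have "(\<lambda>p. \<lfloor>real (Suc k) * fst p\<rfloor>) \<in> measurable (lborel \<Otimes>\<^sub>M M) (count_space UNIV)"
      by measurable
    ultimately show ?thesis
      unfolding fn_def[abs_def] by (rule measurable_compose_countable'[where I = UNIV]) simp_all
  qed
  have "(\<lambda>p. f (c (fst p)) (snd p)) \<in> borel_measurable (lborel \<Otimes>\<^sub>M M)"
  proof (rule borel_measurable_LIMSEQ_metric[OF fn_meas])
    fix p :: "real \<times> 'm" assume "p \<in> space (lborel \<Otimes>\<^sub>M M)"
    then have \<omega>: "snd p \<in> space M"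
      by (auto simp: space_pair_measure)
    have "(\<lambda>k. c (real_of_int \<lfloor>real (Suc k) * fst p\<rfloor> / real (Suc k))) \<longlonglongrightarrow> c (fst p)"
      by (rule continuous_on_tendsto_compose[OF c_cont floor_mult_div_tendsto]) auto
    then show "(\<lambda>k. fn k p) \<longlonglongrightarrow> f (c (fst p)) (snd p)"
      unfolding fn_def
      by (rule continuous_on_tendsto_compose[OF cont[OF \<omega>]]) (use T in \<open>auto simp: c_def\<close>)
  qed
  then show ?thesis
    unfolding c_def .
qed

lemma nn_integral_PiM_pairs_prod:
  fixes A :: "'x measure" and B :: "'y measure" and I :: "'i set"
    and f :: "'i \<Rightarrow> 'x \<times> 'y \<Rightarrow> ennreal"
  assumes A: "prob_space A" and B: "prob_space B" and I: "finite I"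
    and f: "\<And>i. i \<in> I \<Longrightarrow> f i \<in> borel_measurable (A \<Otimes>\<^sub>M B)"
  shows "(\<integral>\<^sup>+\<omega>. (\<Prod>i\<in>I. f i (fst \<omega> i, snd \<omega> i)) \<partial>((\<Pi>\<^sub>M i\<in>I. A) \<Otimes>\<^sub>M (\<Pi>\<^sub>M i\<in>I. B)))
      = (\<Prod>i\<in>I. \<integral>\<^sup>+p. f i p \<partial>(A \<Otimes>\<^sub>M B))"
proof -
  interpret A: prob_space A by (rule A)
  interpret B: prob_space B by (rule B)
  interpret PA: product_prob_space "\<lambda>_. A" I ..
  interpret PB: product_prob_space "\<lambda>_. B" I ..
  have component: "(\<lambda>\<omega>. (fst \<omega> i, snd \<omega> i))
      \<in> measurable ((\<Pi>\<^sub>M i\<in>I. A) \<Otimes>\<^sub>M (\<Pi>\<^sub>M i\<in>I. B)) (A \<Otimes>\<^sub>M B)" if "i \<in> I" for i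
    using that by measurable
  have "(\<integral>\<^sup>+\<omega>. (\<Prod>i\<in>I. f i (fst \<omega> i, snd \<omega> i)) \<partial>((\<Pi>\<^sub>M i\<in>I. A) \<Otimes>\<^sub>M (\<Pi>\<^sub>M i\<in>I. B)))
      = (\<integral>\<^sup>+x. (\<integral>\<^sup>+v. (\<Prod>i\<in>I. f i (x i, v i)) \<partial>(\<Pi>\<^sub>M i\<in>I. B)) \<partial>(\<Pi>\<^sub>M i\<in>I. A))"
    using f component
    by (subst PB.nn_integral_fst[symmetric])
      (auto intro!: borel_measurable_prod_ennreal intro: measurable_compose)
  also have "\<dots> = (\<integral>\<^sup>+x. (\<Prod>i\<in>I. \<integral>\<^sup>+w. f i (x i, w) \<partial>B) \<partial>(\<Pi>\<^sub>M i\<in>I. A))"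
  proof (rule nn_integral_cong)
    fix x assume x: "x \<in> space (\<Pi>\<^sub>M i\<in>I. A)"
    show "(\<integral>\<^sup>+v. (\<Prod>i\<in>I. f i (x i, v i)) \<partial>(\<Pi>\<^sub>M i\<in>I. B)) = (\<Prod>i\<in>I. \<integral>\<^sup>+w. f i (x i, w) \<partial>B)"
      using x f by (intro PB.product_nn_integral_prod[OF I]) (auto simp: space_PiM intro: measurable_Pair2)
  qed
  also have "\<dots> = (\<Prod>i\<in>I. \<integral>\<^sup>+y. (\<integral>\<^sup>+w. f i (y, w) \<partial>B) \<partial>A)"
    using f by (intro PA.product_nn_integral_prod[OF I] B.borel_measurable_nn_integral) simp
  also have "\<dots> = (\<Prod>i\<in>I. \<integral>\<^sup>+p. f i p \<partial>(A \<Otimes>\<^sub>M B))"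
    using f by (intro prod.cong refl B.nn_integral_fst) simp
  finally show ?thesis .
qed

lemma distr_PiM_pairs:
  fixes A :: "'x measure" and B :: "'y measure" and Q :: "'x \<times> 'y \<Rightarrow> 'z" and I :: "'i set"
  assumes A: "prob_space A" and B: "prob_space B" and I: "finite I"
    and Q: "Q \<in> measurable (A \<Otimes>\<^sub>M B) M"
  shows "distr ((\<Pi>\<^sub>M i\<in>I. A) \<Otimes>\<^sub>M (\<Pi>\<^sub>M i\<in>I. B)) (\<Pi>\<^sub>M i\<in>I. distr (A \<Otimes>\<^sub>M B) M Q)
      (\<lambda>\<omega>. \<lambda>i\<in>I. Q (fst \<omega> i, snd \<omega> i)) = (\<Pi>\<^sub>M i\<in>I. distr (A \<Otimes>\<^sub>M B) M Q)"
    (is "distr ?P ?N ?\<Phi> = ?N")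
proof -
  interpret AB: pair_prob_space A B
    by (intro pair_prob_space.intro pair_sigma_finite.intro prob_space_imp_sigma_finite A B)
  interpret \<nu>: product_prob_space "\<lambda>_. distr (A \<Otimes>\<^sub>M B) M Q" I
    by (intro product_prob_space.intro product_sigma_finite.intro product_prob_space_axioms.intro
        prob_space_imp_sigma_finite AB.prob_space_distr Q)
  have \<Phi>: "?\<Phi> \<in> measurable ?P ?N"
    using Q by measurable
  show ?thesis
  proof (rule \<nu>.PiM_eqI[OF I])
    fix S assume S: "\<And>i. i \<in> I \<Longrightarrow> S i \<in> sets (distr (A \<Otimes>\<^sub>M B) M Q)"
    then have SM: "\<And>i. i \<in> I \<Longrightarrow> S i \<in> sets M"
      by simp
    have "emeasure (distr ?P ?N ?\<Phi>) (Pi\<^sub>E I S) = (\<integral>\<^sup>+\<omega>. indicator (?\<Phi> -` Pi\<^sub>E I S \<inter> space ?P) \<omega> \<partial>?P)"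
      using S I \<Phi> by (simp add: emeasure_distr sets_PiM_I_finite)
    also have "\<dots> = (\<integral>\<^sup>+\<omega>. (\<Prod>i\<in>I. indicator (S i) (Q (fst \<omega> i, snd \<omega> i))) \<partial>?P)"
      using I by (intro nn_integral_cong) (auto simp: indicator_def PiE_iff prod_zero_iff)
    also have "\<dots> = (\<Prod>i\<in>I. \<integral>\<^sup>+p. indicator (S i) (Q p) \<partial>(A \<Otimes>\<^sub>M B))"
      using SM by (intro nn_integral_PiM_pairs_prod A B I)
        (auto intro: measurable_compose[OF Q borel_measurable_indicator])
    also have "\<dots> = (\<Prod>i\<in>I. emeasure (distr (A \<Otimes>\<^sub>M B) M Q) (S i))"
    proof (rule prod.cong[OF refl])
      fix i assume "i \<in> I"
      then have "(\<integral>\<^sup>+p. indicator (S i) (Q p) \<partial>(A \<Otimes>\<^sub>M B)) = (\<integral>\<^sup>+z. indicator (S i) z \<partial>distr (A \<Otimes>\<^sub>M B) M Q)"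
        using SM by (intro nn_integral_distr[symmetric, OF Q]) simp
      with S[OF \<open>i \<in> I\<close>] show "(\<integral>\<^sup>+p. indicator (S i) (Q p) \<partial>(A \<Otimes>\<^sub>M B)) = emeasure (distr (A \<Otimes>\<^sub>M B) M Q) (S i)"
        by simp
    qed
    finally show "emeasure (distr ?P ?N ?\<Phi>) (Pi\<^sub>E I S) = (\<Prod>i\<in>I. emeasure (distr (A \<Otimes>\<^sub>M B) M Q) (S i))" .
  qed simp
qed

section \<open>Coupling the nonlinear dynamics with the particle system\<close>

text \<open>The velocity law \<open>\<nu>\<close> is
  arbitrary, and the particle force is written out; \<open>U_pot_gradient\<close> identifies it with the gradient
  of \<open>U_pot\<close>.\<close>
locale mean_field_coupling =
  fixes \<mu> \<nu> :: "'a::euclidean_space measure" and law :: "real \<Rightarrow> 'a measure"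
    and gV :: "'a \<Rightarrow> 'a" and g1W :: "'a \<Rightarrow> 'a \<Rightarrow> 'a"
    and L Lt \<epsilon> T B :: real and N :: nat
    and qb pb :: "real \<Rightarrow> 'a \<Rightarrow> 'a \<Rightarrow> 'a"
    and q p :: "real \<Rightarrow> (nat \<Rightarrow> 'a) \<Rightarrow> (nat \<Rightarrow> 'a) \<Rightarrow> nat \<Rightarrow> 'a"
  assumes prob_space_\<mu>: "prob_space \<mu>" and prob_space_\<nu>: "prob_space \<nu>"
    and law_eq: "\<And>t. law t = distr (\<mu> \<Otimes>\<^sub>M \<nu>) borel (\<lambda>(y, w). qb t y w)"
    and L_nonneg: "0 \<le> L" and Lt_nonneg: "0 \<le> Lt" and eps_nonneg: "0 \<le> \<epsilon>"
    and T_pos: "0 < T" and B_nonneg: "0 \<le> B"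
    and step: "(L + 2 * \<epsilon> * Lt) * T\<^sup>2 \<le> 1"
    and gV_lip: "\<And>x y. norm (gV x - gV y) \<le> L * norm (x - y)"
    and g1W_lip: "\<And>x y x' y'. norm (g1W x y - g1W x' y') \<le> Lt * (norm (x - x') + norm (y - y'))"
    and qb_meas: "\<And>t. (\<lambda>(y, w). qb t y w) \<in> borel_measurable (\<mu> \<Otimes>\<^sub>M \<nu>)"
    and qb_init: "\<And>x v. qb 0 x v = x" and pb_init: "\<And>x v. pb 0 x v = v"
    and qb_ode: "\<And>x v t. t \<in> {0..T} \<Longrightarrow>
        ((\<lambda>s. qb s x v) has_vector_derivative pb t x v) (at t within {0..T})"
    and pb_ode: "\<And>x v t. t \<in> {0..T} \<Longrightarrow>
        ((\<lambda>s. pb s x v) has_vector_derivative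
          - gV (qb t x v) - \<epsilon> *\<^sub>R kernel_mean (law t) g1W (qb t x v)) (at t within {0..T})"
    and law_moment: "\<And>t. t \<in> {0..T} \<Longrightarrow> (\<integral>\<^sup>+y. ennreal ((norm y)\<^sup>2) \<partial>law t) \<le> ennreal B"
    and q_init: "\<And>x v i. i < N \<Longrightarrow> q 0 x v i = x i" and p_init: "\<And>x v i. i < N \<Longrightarrow> p 0 x v i = v i"
    and q_ode: "\<And>x v i t. i < N \<Longrightarrow> t \<in> {0..T} \<Longrightarrow>
        ((\<lambda>s. q s x v i) has_vector_derivative p t x v i) (at t within {0..T})"
    and p_ode: "\<And>x v i t. i < N \<Longrightarrow> t \<in> {0..T} \<Longrightarrow>
        ((\<lambda>s. p s x v i) has_vector_derivative
          - (gV (q t x v i) + (\<epsilon> / N) *\<^sub>R (\<Sum>j<N. g1W (q t x v i) (q t x v j)))) (at t within {0..T})"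
begin

abbreviation initial_law :: "((nat \<Rightarrow> 'a) \<times> (nat \<Rightarrow> 'a)) measure" where
  "initial_law \<equiv> (\<Pi>\<^sub>M i\<in>{..<N}. \<mu>) \<Otimes>\<^sub>M (\<Pi>\<^sub>M i\<in>{..<N}. \<nu>)"

definition empirical_force_error :: "nat \<Rightarrow> real \<Rightarrow> (nat \<Rightarrow> 'a) \<times> (nat \<Rightarrow> 'a) \<Rightarrow> real" where
  "empirical_force_error i s z = norm (kernel_mean (law s) g1W (qb s (fst z i) (snd z i))
      - (1 / N) *\<^sub>R (\<Sum>j<N. g1W (qb s (fst z i) (snd z i)) (qb s (fst z j) (snd z j))))"

definition mean_force_error :: "real \<Rightarrow> (nat \<Rightarrow> 'a) \<times> (nat \<Rightarrow> 'a) \<Rightarrow> real" where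
  "mean_force_error s z = (\<Sum>i<N. \<epsilon> * empirical_force_error i s z) / N"

lemma measurable_g1W [measurable]:
  "f \<in> borel_measurable M \<Longrightarrow> h \<in> borel_measurable M \<Longrightarrow> (\<lambda>x. g1W (f x) (h x)) \<in> borel_measurable M"
  by (rule borel_measurable_continuous_Pair[OF _ _ continuous_on_lipschitz_kernel[OF g1W_lip Lt_nonneg]])

lemma continuous_on_gV: "continuous_on S gV"
  using gV_lip L_nonneg
  by (intro lipschitz_on_continuous_on[of L] lipschitz_onI) (auto simp: dist_norm)

lemma continuous_on_qb: "continuous_on {0..T} (\<lambda>t. qb t x v)"
  by (rule continuous_on_vector_derivative[OF qb_ode])

lemma lipschitz_kernel_law:
  assumes t: "t \<in> {0..T}"
  shows "lipschitz_kernel (law t) g1W Lt"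
proof (intro lipschitz_kernel.intro lipschitz_kernel_axioms.intro)
  interpret pair_prob_space \<mu> \<nu>
    by (intro pair_prob_space.intro pair_sigma_finite.intro prob_space_imp_sigma_finite
        prob_space_\<mu> prob_space_\<nu>)
  show "prob_space (law t)"
    unfolding law_eq using qb_meas by (rule prob_space_distr)
  show "sets (law t) = sets borel"
    by (simp add: law_eq)
  have norm_sq: "(\<lambda>u::'a. (norm u)\<^sup>2) \<in> borel_measurable (law t)"
    by (simp add: law_eq)
  show "integrable (law t) (\<lambda>u. (norm u)\<^sup>2)"
    using law_moment[OF t] by (intro integrableI_bounded[OF norm_sq]) (auto intro: le_less_trans)
qed (use g1W_lip Lt_nonneg in auto)

lemma second_moment_law_le:
  assumes t: "t \<in> {0..T}"
  shows "(\<integral>u. (norm u)\<^sup>2 \<partial>law t) \<le> B"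
proof -
  have "(\<integral>u. (norm u)\<^sup>2 \<partial>law t) = enn2real (\<integral>\<^sup>+u. ennreal ((norm u)\<^sup>2) \<partial>law t)"
    by (rule integral_eq_nn_integral) (auto simp: law_eq)
  also have "\<dots> \<le> B"
    by (rule enn2real_leI[OF B_nonneg law_moment[OF t]])
  finally show ?thesis .
qed

lemma norm_force_difference_le:
  assumes i: "i < N"
  shows "norm ((- gV (a i) - \<epsilon> *\<^sub>R c) - - (gV (b i) + (\<epsilon> / N) *\<^sub>R (\<Sum>j<N. g1W (b i) (b j))))
    \<le> (L + \<epsilon> * Lt) * norm (a i - b i) + \<epsilon> * Lt * ((\<Sum>j<N. norm (a j - b j)) / N)
      + \<epsilon> * norm (c - (1 / N) *\<^sub>R (\<Sum>j<N. g1W (a i) (a j)))"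
proof -
  have N: "0 < real N"
    using i by simp
  define Sa where "Sa = (\<Sum>j<N. g1W (a i) (a j))"
  define Sb where "Sb = (\<Sum>j<N. g1W (b i) (b j))"
  have "norm (Sa - Sb) \<le> (\<Sum>j<N. Lt * (norm (a i - b i) + norm (a j - b j)))"
    unfolding Sa_def Sb_def sum_subtractf[symmetric] by (intro order_trans[OF norm_sum] sum_mono g1W_lip)
  also have "\<dots> = N * Lt * norm (a i - b i) + Lt * (\<Sum>j<N. norm (a j - b j))"
    by (simp add: sum.distrib sum_distrib_left algebra_simps)
  finally have "(\<epsilon> / N) * norm (Sa - Sb)
      \<le> (\<epsilon> / N) * (N * Lt * norm (a i - b i) + Lt * (\<Sum>j<N. norm (a j - b j)))"
    using eps_nonneg by (intro mult_left_mono) auto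
  also have "\<dots> = \<epsilon> * Lt * norm (a i - b i) + \<epsilon> * Lt * ((\<Sum>j<N. norm (a j - b j)) / N)"
    using N by (simp add: field_simps)
  finally have interaction: "norm ((\<epsilon> / N) *\<^sub>R (Sa - Sb))
      \<le> \<epsilon> * Lt * norm (a i - b i) + \<epsilon> * Lt * ((\<Sum>j<N. norm (a j - b j)) / N)"
    using eps_nonneg by simp
  have "(- gV (a i) - \<epsilon> *\<^sub>R c) - - (gV (b i) + (\<epsilon> / N) *\<^sub>R Sb)
      = - (gV (a i) - gV (b i)) - \<epsilon> *\<^sub>R (c - (1 / N) *\<^sub>R Sa) - (\<epsilon> / N) *\<^sub>R (Sa - Sb)"
    by (simp add: scaleR_diff_right algebra_simps)
  also have "norm \<dots> \<le> norm (gV (a i) - gV (b i)) + norm (\<epsilon> *\<^sub>R (c - (1 / N) *\<^sub>R Sa))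
      + norm ((\<epsilon> / N) *\<^sub>R (Sa - Sb))"
  proof -
    have "norm (- x - y - w) \<le> norm x + norm y + norm w" for x y w :: 'a
      using norm_triangle_ineq4[of "- x - y" w] norm_triangle_ineq4[of "- x" y] by simp
    then show ?thesis .
  qed
  finally have "norm ((- gV (a i) - \<epsilon> *\<^sub>R c) - - (gV (b i) + (\<epsilon> / N) *\<^sub>R Sb))
      \<le> norm (gV (a i) - gV (b i)) + \<epsilon> * norm (c - (1 / N) *\<^sub>R Sa) + norm ((\<epsilon> / N) *\<^sub>R (Sa - Sb))"
    using eps_nonneg by simp
  then show ?thesis
    using gV_lip[of "a i" "b i"] interaction unfolding Sa_def Sb_def
    by (simp add: algebra_simps)
qed

lemma empirical_force_error_le:
  assumes s: "s \<in> {0..T}" and N: "0 < N"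
  shows "empirical_force_error i s z
      \<le> Lt * (sqrt B + (\<Sum>j<N. norm (qb s (fst z j) (snd z j))) / N)"
proof -
  interpret K: lipschitz_kernel "law s" g1W Lt
    by (rule lipschitz_kernel_law[OF s])
  have "empirical_force_error i s z
      \<le> Lt * (sqrt (\<integral>u. (norm u)\<^sup>2 \<partial>law s) + (\<Sum>j<N. norm (qb s (fst z j) (snd z j))) / N)"
    unfolding empirical_force_error_def using K.norm_kernel_mean_diff_average_le[of "{..<N}"] N
    by (simp add: lessThan_empty_iff)
  also have "\<dots> \<le> Lt * (sqrt B + (\<Sum>j<N. norm (qb s (fst z j) (snd z j))) / N)"
    using second_moment_law_le[OF s] Lt_nonneg by (intro mult_left_mono add_right_mono) auto
  finally show ?thesis .
qed

text \<open>The mean-field force along a trajectory need not be continuous in time; it is integrable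
  because it is, up to continuous terms, the derivative of the velocity.\<close>
lemma integrable_on_mean_field_force:
  "(\<lambda>s. \<epsilon> *\<^sub>R kernel_mean (law s) g1W (qb s x v)) integrable_on {0..T}"
proof -
  have "((\<lambda>s. - gV (qb s x v) - \<epsilon> *\<^sub>R kernel_mean (law s) g1W (qb s x v))
      has_integral pb T x v - pb 0 x v) {0..T}"
    using T_pos by (intro fundamental_theorem_of_calculus pb_ode) auto
  then have "(\<lambda>s. - gV (qb s x v) - \<epsilon> *\<^sub>R kernel_mean (law s) g1W (qb s x v)) integrable_on {0..T}"
    by (rule has_integral_integrable)
  moreover have "(\<lambda>s. gV (qb s x v)) integrable_on {0..T}"
    by (intro integrable_continuous_interval continuous_on_compose2[OF continuous_on_gV continuous_on_qb]) auto
  ultimately have "(\<lambda>s. (- gV (qb s x v) - \<epsilon> *\<^sub>R kernel_mean (law s) g1W (qb s x v))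
      + gV (qb s x v)) integrable_on {0..T}"
    by (rule integrable_add)
  then show ?thesis
    by (simp add: integrable_neg_iff)
qed

lemma integrable_on_empirical_force_error:
  assumes i: "i < N"
  shows "(\<lambda>s. \<epsilon> * empirical_force_error i s z) integrable_on {0..T}"
proof -
  define Y where "Y j s = qb s (fst z j) (snd z j)" for j s
  have Y_cont: "continuous_on {0..T} (Y j)" for j
    unfolding Y_def by (rule continuous_on_qb)
  define u where "u s = \<epsilon> *\<^sub>R kernel_mean (law s) g1W (Y i s) - (\<epsilon> / N) *\<^sub>R (\<Sum>j<N. g1W (Y i s) (Y j s))"
    for s
  have u_int: "u integrable_on {0..T}"
  proof -
    have "continuous_on {0..T} (\<lambda>s. g1W (Y i s) (Y j s))" for j
      using continuous_on_compose2[OF continuous_on_lipschitz_kernel[OF g1W_lip Lt_nonneg]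
          continuous_on_Pair[OF Y_cont Y_cont]] by simp
    then show ?thesis
      unfolding u_def Y_def
      by (intro integrable_diff[OF integrable_on_mean_field_force] integrable_continuous_interval
          continuous_intros)
  qed
  have u_norm: "\<epsilon> * empirical_force_error i s z = norm (u s)" for s
  proof -
    have "u s = \<epsilon> *\<^sub>R (kernel_mean (law s) g1W (Y i s) - (1 / N) *\<^sub>R (\<Sum>j<N. g1W (Y i s) (Y j s)))"
      unfolding u_def by (simp add: scaleR_diff_right)
    then show ?thesis
      using eps_nonneg unfolding empirical_force_error_def Y_def by simp
  qed
  have "norm (u s) \<le> \<epsilon> * (Lt * (sqrt B + (\<Sum>j<N. norm (Y j s)) / N))" if "s \<in> {0..T}" for s
    using empirical_force_error_le[OF that, of i z] i eps_nonneg unfolding u_norm[symmetric] Y_def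
    by (intro mult_left_mono) auto
  moreover have "(\<lambda>s. \<epsilon> * (Lt * (sqrt B + (\<Sum>j<N. norm (Y j s)) / N))) integrable_on {0..T}"
    using i by (intro integrable_continuous_interval continuous_intros Y_cont) auto
  ultimately have "u absolutely_integrable_on {0..T}"
    by (rule absolutely_integrable_integrable_bound[OF _ u_int])
  then show ?thesis
    unfolding u_norm by (simp add: absolutely_integrable_on_def)
qed

lemma mean_deviation_le_integral:
  "(1 / N) * (\<Sum>i<N. norm (qb T (fst z i) (snd z i) - q T (fst z) (snd z) i))
    \<le> 2 * T * integral {0..T} (\<lambda>s. mean_force_error s z)"
proof -
  obtain x v where z: "z = (x, v)"
    by (cases z)
  have "(\<Sum>i<N. norm (qb T (x i) (v i) - q T x v i)) / N
      \<le> 2 * T * integral {0..T} (\<lambda>s. (\<Sum>i<N. \<epsilon> * empirical_force_error i s z) / N)"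
  proof (rule second_order_mean_gronwall[where \<alpha> = "L + \<epsilon> * Lt" and \<beta> = "\<epsilon> * Lt"
        and P = "\<lambda>i s. pb s (x i) (v i) - p s x v i"
        and F = "\<lambda>i s. (- gV (qb s (x i) (v i)) - \<epsilon> *\<^sub>R kernel_mean (law s) g1W (qb s (x i) (v i)))
           - - (gV (q s x v i) + (\<epsilon> / N) *\<^sub>R (\<Sum>j<N. g1W (q s x v i) (q s x v j)))"])
    show "0 \<le> L + \<epsilon> * Lt" "0 \<le> \<epsilon> * Lt"
      using L_nonneg Lt_nonneg eps_nonneg by simp_all
    show "(L + \<epsilon> * Lt + \<epsilon> * Lt) * T\<^sup>2 \<le> 1"
      using step by (simp add: algebra_simps)
    fix i assume i: "i < N"
    show "qb 0 (x i) (v i) - q 0 x v i = 0" "pb 0 (x i) (v i) - p 0 x v i = 0"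
      using i by (simp_all add: qb_init pb_init q_init p_init)
    show "(\<lambda>s. \<epsilon> * empirical_force_error i s z) integrable_on {0..T}"
      by (rule integrable_on_empirical_force_error[OF i])
    fix s assume s: "s \<in> {0..T}"
    show "((\<lambda>s. qb s (x i) (v i) - q s x v i) has_vector_derivative pb s (x i) (v i) - p s x v i)
        (at s within {0..T})"
      by (rule has_vector_derivative_diff[OF qb_ode[OF s] q_ode[OF i s]])
    show "((\<lambda>s. pb s (x i) (v i) - p s x v i) has_vector_derivative
        (- gV (qb s (x i) (v i)) - \<epsilon> *\<^sub>R kernel_mean (law s) g1W (qb s (x i) (v i)))
           - - (gV (q s x v i) + (\<epsilon> / N) *\<^sub>R (\<Sum>j<N. g1W (q s x v i) (q s x v j))))
        (at s within {0..T})"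
      by (rule has_vector_derivative_diff[OF pb_ode[OF s] p_ode[OF i s]])
    show "norm ((- gV (qb s (x i) (v i)) - \<epsilon> *\<^sub>R kernel_mean (law s) g1W (qb s (x i) (v i)))
           - - (gV (q s x v i) + (\<epsilon> / N) *\<^sub>R (\<Sum>j<N. g1W (q s x v i) (q s x v j))))
        \<le> (L + \<epsilon> * Lt) * norm (qb s (x i) (v i) - q s x v i)
          + \<epsilon> * Lt * ((\<Sum>j<N. norm (qb s (x j) (v j) - q s x v j)) / N)
          + \<epsilon> * empirical_force_error i s z"
      using norm_force_difference_le[OF i, of "\<lambda>j. qb s (x j) (v j)" _ "\<lambda>j. q s x v j"]
      by (simp add: empirical_force_error_def z)
    show "0 \<le> \<epsilon> * empirical_force_error i s z"
      using eps_nonneg by (simp add: empirical_force_error_def)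
  qed (rule T_pos)
  then show ?thesis
    by (simp add: z mean_force_error_def)
qed

lemma nn_integral_empirical_force_error_le:
  assumes s: "s \<in> {0..T}" and i: "i < N"
  shows "(\<lambda>z. ennreal (empirical_force_error i s z)) \<in> borel_measurable initial_law"
    and "(\<integral>\<^sup>+z. ennreal (empirical_force_error i s z) \<partial>initial_law) \<le> ennreal (2 * Lt * sqrt B / sqrt N)"
proof -
  interpret K: lipschitz_kernel "law s" g1W Lt
    by (rule lipschitz_kernel_law[OF s])
  define Q where "Q = (\<lambda>(y, w). qb s y w)"
  define \<Phi> where "\<Phi> z = (\<lambda>j\<in>{..<N}. Q (fst z j, snd z j))" for z :: "(nat \<Rightarrow> 'a) \<times> (nat \<Rightarrow> 'a)"
  define F where "F y = ennreal (norm (kernel_mean (law s) g1W (y i)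
      - (1 / card {..<N}) *\<^sub>R (\<Sum>j\<in>{..<N}. g1W (y i) (y j))))" for y :: "nat \<Rightarrow> 'a"
  have Q: "Q \<in> measurable (\<mu> \<Otimes>\<^sub>M \<nu>) borel"
    unfolding Q_def by (rule qb_meas)
  have \<Phi>_meas: "\<Phi> \<in> measurable initial_law (\<Pi>\<^sub>M j\<in>{..<N}. law s)"
    unfolding \<Phi>_def
  proof (rule measurable_restrict)
    fix j assume "j \<in> {..<N}"
    then have "(\<lambda>z. Q (fst z j, snd z j)) \<in> borel_measurable initial_law"
      by (intro measurable_compose[OF _ Q]) measurable
    then show "(\<lambda>z. Q (fst z j, snd z j)) \<in> measurable initial_law (law s)"
      by (subst measurable_cong_sets[OF refl K.sets_eq_borel])
  qed
  have "distr initial_law (\<Pi>\<^sub>M j\<in>{..<N}. law s) \<Phi> = (\<Pi>\<^sub>M j\<in>{..<N}. law s)"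
    using distr_PiM_pairs[OF prob_space_\<mu> prob_space_\<nu> finite_lessThan Q]
    unfolding \<Phi>_def law_eq Q_def .
  moreover have F_meas: "F \<in> borel_measurable (\<Pi>\<^sub>M j\<in>{..<N}. law s)"
    unfolding F_def using i
    by (intro measurable_compose[OF _ measurable_ennreal] borel_measurable_norm borel_measurable_diff
        borel_measurable_scaleR borel_measurable_const borel_measurable_sum K.measurable_kernel_mean
        measurable_g1W K.measurable_component_borel) auto
  moreover have F_\<Phi>: "F (\<Phi> z) = ennreal (empirical_force_error i s z)" for z
    using i by (simp add: F_def \<Phi>_def Q_def empirical_force_error_def)
  ultimately have "(\<integral>\<^sup>+z. ennreal (empirical_force_error i s z) \<partial>initial_law) = (\<integral>\<^sup>+y. F y \<partial>(\<Pi>\<^sub>M j\<in>{..<N}. law s))"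
    using nn_integral_distr[OF \<Phi>_meas, of F] F_meas by (simp add: F_\<Phi>)
  also have "\<dots> \<le> ennreal (2 * Lt * sqrt (\<integral>u. (norm u)\<^sup>2 \<partial>law s) / sqrt N)"
    unfolding F_def using K.nn_integral_empirical_kernel_mean_error_le[OF finite_lessThan, of i] i by simp
  also have "\<dots> \<le> ennreal (2 * Lt * sqrt B / sqrt N)"
    using second_moment_law_le[OF s] Lt_nonneg
    by (intro ennreal_leI divide_right_mono mult_left_mono) auto
  finally show "(\<integral>\<^sup>+z. ennreal (empirical_force_error i s z) \<partial>initial_law) \<le> ennreal (2 * Lt * sqrt B / sqrt N)" .
  show "(\<lambda>z. ennreal (empirical_force_error i s z)) \<in> borel_measurable initial_law"
    using measurable_compose[OF \<Phi>_meas F_meas] by (simp add: comp_def F_\<Phi>)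
qed

lemma measurable_clamped_trajectory:
  "(\<lambda>p. qb (max 0 (min T (fst p))) (fst (snd p)) (snd (snd p))) \<in> borel_measurable (lborel \<Otimes>\<^sub>M (\<mu> \<Otimes>\<^sub>M \<nu>))"
  using qb_meas T_pos continuous_on_qb
  by (intro borel_measurable_caratheodory[where f = "\<lambda>t \<omega>. qb t (fst \<omega>) (snd \<omega>)"])
    (auto simp: case_prod_beta')

lemma measurable_clamped_particle:
  assumes "j < N"
  shows "(\<lambda>p. qb (max 0 (min T (fst p))) (fst (snd p) j) (snd (snd p) j))
    \<in> borel_measurable (lborel \<Otimes>\<^sub>M initial_law)"
proof -
  have "j \<in> {..<N}"
    using assms by simp
  then have "(\<lambda>p. (fst p, (fst (snd p) j, snd (snd p) j)))
      \<in> measurable (lborel \<Otimes>\<^sub>M initial_law) (lborel \<Otimes>\<^sub>M (\<mu> \<Otimes>\<^sub>M \<nu>))"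
    by measurable
  from measurable_compose[OF this measurable_clamped_trajectory] show ?thesis
    by simp
qed

lemma measurable_clamped_kernel_mean:
  "(\<lambda>p. kernel_mean (law (max 0 (min T (fst p)))) g1W (snd p)) \<in> borel_measurable (lborel \<Otimes>\<^sub>M borel)"
proof -
  let ?c = "\<lambda>s. max 0 (min T s)"
  interpret pair_prob_space \<mu> \<nu>
    by (intro pair_prob_space.intro pair_sigma_finite.intro prob_space_imp_sigma_finite
        prob_space_\<mu> prob_space_\<nu>)
  have "(\<lambda>x. (fst (fst x), snd x)) \<in> measurable ((lborel \<Otimes>\<^sub>M borel) \<Otimes>\<^sub>M (\<mu> \<Otimes>\<^sub>M \<nu>)) (lborel \<Otimes>\<^sub>M (\<mu> \<Otimes>\<^sub>M \<nu>))"
    by measurable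
  from measurable_compose[OF this measurable_clamped_trajectory]
  have flow: "(\<lambda>x. qb (?c (fst (fst x))) (fst (snd x)) (snd (snd x)))
      \<in> borel_measurable ((lborel \<Otimes>\<^sub>M borel) \<Otimes>\<^sub>M (\<mu> \<Otimes>\<^sub>M \<nu>))"
    by simp
  have "kernel_mean (law t) g1W a = (\<integral>\<omega>. g1W a (qb t (fst \<omega>) (snd \<omega>)) \<partial>(\<mu> \<Otimes>\<^sub>M \<nu>))" for t a
    unfolding kernel_mean_def law_eq using qb_meas[of t]
    by (subst integral_distr) (auto simp: case_prod_beta')
  moreover have "(\<lambda>(p, \<omega>). g1W (snd p) (qb (?c (fst p)) (fst \<omega>) (snd \<omega>)))
      \<in> borel_measurable ((lborel \<Otimes>\<^sub>M borel) \<Otimes>\<^sub>M (\<mu> \<Otimes>\<^sub>M \<nu>))"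
    unfolding case_prod_beta' by (rule measurable_g1W[OF _ flow]) measurable
  ultimately show ?thesis
    using borel_measurable_lebesgue_integral by simp
qed

lemma measurable_clamped_empirical_force_error:
  assumes i: "i < N"
  shows "(\<lambda>p. empirical_force_error i (max 0 (min T (fst p))) (snd p)) \<in> borel_measurable (lborel \<Otimes>\<^sub>M initial_law)"
proof -
  let ?c = "\<lambda>s. max 0 (min T s)"
  have "(\<lambda>p. kernel_mean (law (?c (fst p))) g1W (qb (?c (fst p)) (fst (snd p) i) (snd (snd p) i)))
      \<in> borel_measurable (lborel \<Otimes>\<^sub>M initial_law)"
    using measurable_compose[OF measurable_Pair[OF measurable_fst measurable_clamped_particle[OF i]]
        measurable_clamped_kernel_mean] by simp
  then have "(\<lambda>p. kernel_mean (law (?c (fst p))) g1W (qb (?c (fst p)) (fst (snd p) i) (snd (snd p) i))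
      - (1 / N) *\<^sub>R (\<Sum>j<N. g1W (qb (?c (fst p)) (fst (snd p) i) (snd (snd p) i))
          (qb (?c (fst p)) (fst (snd p) j) (snd (snd p) j)))) \<in> borel_measurable (lborel \<Otimes>\<^sub>M initial_law)"
    using measurable_clamped_particle i
    by (intro borel_measurable_diff borel_measurable_scaleR borel_measurable_const borel_measurable_sum
        measurable_g1W) auto
  then show ?thesis
    unfolding empirical_force_error_def by (rule measurable_compose[OF _ borel_measurable_norm])
qed

lemma nn_integral_mean_force_error_le:
  assumes s: "s \<in> {0..T}"
  shows "(\<integral>\<^sup>+z. ennreal (mean_force_error s z) \<partial>initial_law) \<le> ennreal (\<epsilon> * (2 * Lt * sqrt B / sqrt N))"
proof (cases "N = 0")
  case False
  define c where "c = 2 * Lt * sqrt B / sqrt N"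
  have c_nonneg: "0 \<le> c"
    unfolding c_def using Lt_nonneg B_nonneg by simp
  have "ennreal ((\<Sum>i<N. \<epsilon> * empirical_force_error i s z) / N)
      = ennreal (\<epsilon> / N) * (\<Sum>i<N. ennreal (empirical_force_error i s z))" for z
    using eps_nonneg
    by (simp add: sum_distrib_left[symmetric] ennreal_mult[symmetric] sum_ennreal empirical_force_error_def
        sum_nonneg)
  moreover have "(\<integral>\<^sup>+z. (\<Sum>i<N. ennreal (empirical_force_error i s z)) \<partial>initial_law)
      = (\<Sum>i<N. \<integral>\<^sup>+z. ennreal (empirical_force_error i s z) \<partial>initial_law)"
    using nn_integral_empirical_force_error_le(1)[OF s] by (intro nn_integral_sum) auto
  ultimately have "(\<integral>\<^sup>+z. ennreal ((\<Sum>i<N. \<epsilon> * empirical_force_error i s z) / N) \<partial>initial_law)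
      = ennreal (\<epsilon> / N) * (\<Sum>i<N. \<integral>\<^sup>+z. ennreal (empirical_force_error i s z) \<partial>initial_law)"
    using nn_integral_empirical_force_error_le(1)[OF s]
    by (simp add: nn_integral_cmult borel_measurable_sum)
  also have "\<dots> \<le> ennreal (\<epsilon> / N) * (\<Sum>i<N. ennreal c)"
    unfolding c_def using nn_integral_empirical_force_error_le(2)[OF s]
    by (intro mult_left_mono sum_mono) auto
  also have "\<dots> = ennreal (\<epsilon> * c)"
    using False eps_nonneg c_nonneg
    by (simp add: ennreal_of_nat_eq_real_of_nat ennreal_mult[symmetric])
  finally show ?thesis
    unfolding c_def mean_force_error_def .
qed (unfold mean_force_error_def, simp)

lemma mean_force_error_nonneg: "0 \<le> mean_force_error s z"
  unfolding mean_force_error_def empirical_force_error_def using eps_nonneg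
  by (auto intro!: divide_nonneg_nonneg sum_nonneg)

lemma measurable_mean_force_error:
  "(\<lambda>(s, z). ennreal (indicator {0..T} s * mean_force_error s z)) \<in> borel_measurable (lborel \<Otimes>\<^sub>M initial_law)"
proof -
  have "indicator {0..T} s * mean_force_error s z
      = indicator {0..T} s * ((\<Sum>i<N. \<epsilon> * empirical_force_error i (max 0 (min T s)) z) / N)" for s z
    by (cases "s \<in> {0..T}") (simp_all add: mean_force_error_def)
  then have "(\<lambda>(s, z). ennreal (indicator {0..T} s * mean_force_error s z)) = (\<lambda>p. ennreal (indicator {0..T} (fst p)
      * ((\<Sum>i<N. \<epsilon> * empirical_force_error i (max 0 (min T (fst p))) (snd p)) / N)))"
    by (simp add: fun_eq_iff)
  also have "\<dots> \<in> borel_measurable (lborel \<Otimes>\<^sub>M initial_law)"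
    using measurable_clamped_empirical_force_error by measurable
  finally show ?thesis .
qed

lemma mean_deviation_le_nn_integral:
  "ennreal ((1 / real N) * (\<Sum>i<N. norm (qb T (fst z i) (snd z i) - q T (fst z) (snd z) i)))
    \<le> ennreal (2 * T) * (\<integral>\<^sup>+s. ennreal (indicator {0..T} s * mean_force_error s z) \<partial>lborel)"
proof -
  have e_int: "(\<lambda>s. mean_force_error s z) integrable_on {0..T}"
    unfolding mean_force_error_def using integrable_on_empirical_force_error
    by (intro integrable_on_divide integrable_sum) auto
  have "(\<integral>\<^sup>+s. ennreal (indicator {0..T} s * mean_force_error s z) \<partial>lborel)
      = ennreal (integral {0..T} (\<lambda>s. mean_force_error s z))"
    using mean_force_error_nonneg integrable_integral[OF e_int] by (rule nn_integral_has_integral_lebesgue)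
  moreover have "0 \<le> integral {0..T} (\<lambda>s. mean_force_error s z)"
    using mean_force_error_nonneg by (intro integral_nonneg[OF e_int])
  ultimately show ?thesis
    using mean_deviation_le_integral[of z] T_pos by (simp add: ennreal_mult[symmetric] ennreal_leI)
qed

theorem nn_integral_mean_deviation_le:
  "(\<integral>\<^sup>+z. ennreal ((1 / real N) * (\<Sum>i<N. norm (qb T (fst z i) (snd z i) - q T (fst z) (snd z) i)))
      \<partial>initial_law) \<le> ennreal (1 / sqrt N * (4 * T\<^sup>2 * \<epsilon> * Lt * sqrt B))"
proof -
  interpret P: prob_space initial_law
    by (intro prob_space_pair prob_space_PiM prob_space_\<mu> prob_space_\<nu>)
  interpret LP: pair_sigma_finite lborel initial_law
    by (intro pair_sigma_finite.intro lborel.sigma_finite_measure_axioms P.sigma_finite_measure_axioms)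
  define f where "f s z = ennreal (indicator {0..T} s * mean_force_error s z)" for s z
  define c where "c = \<epsilon> * (2 * Lt * sqrt B / sqrt N)"
  have c_nonneg: "0 \<le> c"
    unfolding c_def using eps_nonneg Lt_nonneg B_nonneg by simp
  have f_meas: "case_prod f \<in> borel_measurable (lborel \<Otimes>\<^sub>M initial_law)"
    unfolding f_def by (rule measurable_mean_force_error)
  have "(\<integral>\<^sup>+z. ennreal ((1 / real N) * (\<Sum>i<N. norm (qb T (fst z i) (snd z i) - q T (fst z) (snd z) i)))
      \<partial>initial_law) \<le> (\<integral>\<^sup>+z. ennreal (2 * T) * (\<integral>\<^sup>+s. f s z \<partial>lborel) \<partial>initial_law)"
    unfolding f_def by (intro nn_integral_mono mean_deviation_le_nn_integral)
  also have "\<dots> = ennreal (2 * T) * (\<integral>\<^sup>+s. (\<integral>\<^sup>+z. f s z \<partial>initial_law) \<partial>lborel)"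
    using lborel.borel_measurable_nn_integral[OF measurable_pair_swap[OF f_meas]]
    by (simp add: nn_integral_cmult LP.Fubini'[OF f_meas])
  also have "\<dots> \<le> ennreal (2 * T) * (\<integral>\<^sup>+s. ennreal c * indicator {0..T} s \<partial>lborel)"
    using nn_integral_mean_force_error_le unfolding f_def c_def
    by (intro mult_left_mono nn_integral_mono) (auto split: split_indicator)
  also have "\<dots> = ennreal (2 * T * (c * T))"
    using T_pos c_nonneg by (simp add: nn_integral_cmult_indicator ennreal_mult)
  also have "2 * T * (c * T) = 1 / sqrt N * (4 * T\<^sup>2 * \<epsilon> * Lt * sqrt B)"
    by (simp add: c_def power2_eq_square divide_inverse algebra_simps)
  finally show ?thesis .
qed

end

theorem mainTheorem5:
  fixes V :: "'a::euclidean_space \<Rightarrow> real" and gV :: "'a \<Rightarrow> 'a"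
    and W :: "'a \<Rightarrow> 'a \<Rightarrow> real" and g1W :: "'a \<Rightarrow> 'a \<Rightarrow> 'a"
    and L K R Lt :: real
    and mu :: "'a measure" and N :: nat and T \<epsilon> B1 :: real
    and qb pb :: "real \<Rightarrow> 'a \<Rightarrow> 'a \<Rightarrow> 'a"
    and q p :: "real \<Rightarrow> (nat \<Rightarrow> 'a) \<Rightarrow> (nat \<Rightarrow> 'a) \<Rightarrow> nat \<Rightarrow> 'a"
    and G :: "(nat \<Rightarrow> 'a) \<Rightarrow> nat \<Rightarrow> 'a"
  assumes gradV: "\<And>x. (V has_derivative (\<lambda>h. gV x \<bullet> h)) (at x)"
    and grad1W: "\<And>x y. ((\<lambda>z. W z y) has_derivative (\<lambda>h. g1W x y \<bullet> h)) (at x)"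
    and cst: "L > 0" "K > 0" "R \<ge> 0" "Lt \<ge> 0"
    and V0: "V 0 = 0" and Vnn: "\<And>x. V x \<ge> 0"
    and gV_lip: "\<And>x y. norm (gV x - gV y) \<le> L * norm (x - y)"
    and gV_conv: "\<And>x y. norm (x - y) \<ge> R \<Longrightarrow>
        (x - y) \<bullet> (gV x - gV y) \<ge> K * (norm (x - y))\<^sup>2 + (norm (gV x - gV y))\<^sup>2 / L"
    and W_sym: "\<And>x y. W x y = W y x"
    and g1W_lip: "\<And>x y x' y'. norm (g1W x y - g1W x' y') \<le> Lt * (norm (x - x') + norm (y - y'))"
    and mu_prob: "prob_space mu" and mu_sets: "sets mu = sets borel"
    and mu_mom2: "integrable mu (\<lambda>y. (norm y)\<^sup>2)"
    and T_pos: "T > 0" and eps_nn: "\<epsilon> \<ge> 0"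
    and step: "(L + 2 * \<epsilon> * Lt) * T\<^sup>2 \<le> 1"
    and qb_meas: "\<And>t. (\<lambda>(y, w). qb t y w) \<in> borel_measurable (mu \<Otimes>\<^sub>M std_gaussian)"
    and qb_init: "\<And>x v. qb 0 x v = x" "\<And>x v. pb 0 x v = v"
    and qb_ode: "\<And>x v t. t \<in> {0..T} \<Longrightarrow>
        ((\<lambda>s. qb s x v) has_vector_derivative pb t x v) (at t within {0..T})"
    and pb_ode: "\<And>x v t. t \<in> {0..T} \<Longrightarrow>
        ((\<lambda>s. pb s x v) has_vector_derivative
           (- gV (qb t x v) - \<epsilon> *\<^sub>R (\<integral>u. g1W (qb t x v) u \<partial>(nonlin_law mu qb t))))
         (at t within {0..T})"
    and B1_bound: "\<And>t. t \<in> {0..T} \<Longrightarrow>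
        (\<integral>\<^sup>+ y. ennreal ((norm y)\<^sup>2) \<partial>(nonlin_law mu qb t)) \<le> ennreal B1"
    and gradU: "\<And>y i. i < N \<Longrightarrow>
        ((\<lambda>z. U_pot N \<epsilon> V W (y(i := z))) has_derivative (\<lambda>h. G y i \<bullet> h)) (at (y i))"
    and q_init: "\<And>x v i. i < N \<Longrightarrow> q 0 x v i = x i" "\<And>x v i. i < N \<Longrightarrow> p 0 x v i = v i"
    and q_ode: "\<And>x v i t. i < N \<Longrightarrow> t \<in> {0..T} \<Longrightarrow>
        ((\<lambda>s. q s x v i) has_vector_derivative p t x v i) (at t within {0..T})"
    and p_ode: "\<And>x v i t. i < N \<Longrightarrow> t \<in> {0..T} \<Longrightarrow>
        ((\<lambda>s. p s x v i) has_vector_derivative (- G (q t x v) i)) (at t within {0..T})"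
  shows "(\<integral>\<^sup>+ z. ennreal ((1 / real N) * (\<Sum>i<N. norm (qb T (fst z i) (snd z i) - q T (fst z) (snd z) i)))
            \<partial>((\<Pi>\<^sub>M i\<in>{..<N}. mu) \<Otimes>\<^sub>M (\<Pi>\<^sub>M i\<in>{..<N}. std_gaussian)))
         \<le> ennreal (1 / sqrt (real N) * (4 * T\<^sup>2 * \<epsilon> * Lt * sqrt B1))"
proof -
  \<comment> \<open>\<open>B1\<close> may be negative, in which case the moments vanish and both sides are \<open>0\<close>; hence \<open>max B1 0\<close>.\<close>
  have p_ode': "((\<lambda>s. p s x v i) has_vector_derivative
      - (gV (q t x v i) + (\<epsilon> / N) *\<^sub>R (\<Sum>j<N. g1W (q t x v i) (q t x v j)))) (at t within {0..T})"
    if "i < N" "t \<in> {0..T}" for x v i t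
    using p_ode[OF that] U_pot_gradient[OF gradV grad1W g1W_lip cst(4) W_sym gradU[OF that(1)] that(1)]
    by simp
  have law_moment: "(\<integral>\<^sup>+y. ennreal ((norm y)\<^sup>2) \<partial>nonlin_law mu qb t) \<le> ennreal (max B1 0)"
    if "t \<in> {0..T}" for t
    using B1_bound[OF that] by (simp add: ennreal_max_0)
  interpret mean_field_coupling mu std_gaussian "nonlin_law mu qb" gV g1W L Lt \<epsilon> T "max B1 0" N qb pb q p
    by (rule mean_field_coupling.intro; rule mu_prob prob_space_std_gaussian nonlin_law_def
        less_imp_le[OF cst(1)] cst(4) eps_nn T_pos max.cobounded2 step gV_lip g1W_lip qb_meas qb_init
        qb_ode pb_ode[folded kernel_mean_def] law_moment q_init q_ode p_ode')
  have "ennreal (1 / sqrt N * (4 * T\<^sup>2 * \<epsilon> * Lt * sqrt (max B1 0)))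
      \<le> ennreal (1 / sqrt N * (4 * T\<^sup>2 * \<epsilon> * Lt * sqrt B1))"
    by (cases "0 \<le> B1") auto
  with nn_integral_mean_deviation_le show ?thesis
    by (rule order_trans)
qed

end
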